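(* Let $\alpha\in\mathbb R$ and $n\ge1$. There is a one-to-one correspondence between $(2n+1)$-dimensional $\alpha$-cosymplectic Lie algebras $(\mathfrak g,\eta,\omega)$ and pairs consisting of a $2n$-dimensional symplectic Lie algebra $(\mathfrak h,\Omega)$ together with a derivation $D\in\mathrm{Der}(\mathfrak h)$ such that $D+\alpha I$ is an infinitesimal symplectic transformation of $(\mathfrak h,\Omega)$. The correspondence sends $(\mathfrak g,\eta,\omega)$ to $\mathfrak h=\ker\eta$, $\Omega=\omega|_{\mathfrak h\times\mathfrak h}$, $D=\mathrm{ad}_\xi|_{\mathfrak h}$ ($\xi$ the Reeb vector), and conversely $(\mathfrak h,\Omega,D)$ to $\mathfrak g=\mathbb R\xi\oplus\mathfrak h$ with $[x,y]=[x,y]_{\mathfrak h}$, $[\xi,x]=Dx$ ($x,y\in\mathfrak h$), $\eta(\xi)=1$, $\eta|_{\mathfrak h}=0$, $\omega(\xi,\cdot)=0$, $\omega|_{\mathfrak h\times\mathfrak h}=\Omega$.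
   Context: For a Lie algebra, $d\eta(x,y)=-\eta([x,y])$ and $d\omega(x,y,z)=-\omega([x,y],z)-\omega([y,z],x)-\omega([z,x],y)$. An almost cosymplectic structure on a $(2n+1)$-dimensional Lie algebra $\mathfrak g$ is a pair $(\eta,\omega)$, $\eta\in\mathfrak g^*$, $\omega$ a $2$-form, with $\eta\wedge\omega^n\neq0$; its Reeb vector $\xi$ satisfies $\eta(\xi)=1$, $\omega(\xi,\cdot)=0$. It is $\alpha$-cosymplectic if $d\eta=0$ and $d\omega=2\alpha\,\eta\wedge\omega$. A symplectic structure on a $2n$-dimensional Lie algebra $\mathfrak h$ is a closed $2$-form $\Omega$ with $\Omega^n\neq0$. A linear map $\theta:\mathfrak h\to\mathfrak h$ is an infinitesimal symplectic transformation if $\theta^T\circ\Omega+\Omega\circ\theta=0$, equivalently if $(x,y)\mapsto\Omega(\theta x,y)$ is symmetric. *)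

theory Defs
  imports "HOL-Analysis.Analysis" "HOL-Combinatorics.Permutations"
begin

text \<open>Values of B outside V are irrelevant.\<close>

definition linear_on :: "'a::real_vector set \<Rightarrow> ('a \<Rightarrow> 'b::real_vector) \<Rightarrow> bool" where
  "linear_on V f \<longleftrightarrow> (\<forall>x\<in>V. \<forall>y\<in>V. \<forall>c::real.
      f (x + y) = f x + f y \<and> f (c *\<^sub>R x) = c *\<^sub>R f x)"

definition bilinear_on :: "'a::real_vector set \<Rightarrow> ('a \<Rightarrow> 'a \<Rightarrow> 'b::real_vector) \<Rightarrow> bool" where
  "bilinear_on V B \<longleftrightarrow> (\<forall>x\<in>V. linear_on V (B x)) \<and> (\<forall>y\<in>V. linear_on V (\<lambda>x. B x y))"

definition lie_algebra :: "'a::real_vector set \<Rightarrow> ('a \<Rightarrow> 'a \<Rightarrow> 'a) \<Rightarrow> bool" where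
  "lie_algebra V B \<longleftrightarrow> subspace V \<and> (\<forall>x\<in>V. \<forall>y\<in>V. B x y \<in> V) \<and> bilinear_on V B
     \<and> (\<forall>x\<in>V. B x x = 0)
     \<and> (\<forall>x\<in>V. \<forall>y\<in>V. \<forall>z\<in>V. B x (B y z) + B y (B z x) + B z (B x y) = 0)"

definition two_form :: "'a::real_vector set \<Rightarrow> ('a \<Rightarrow> 'a \<Rightarrow> real) \<Rightarrow> bool" where
  "two_form V \<omega> \<longleftrightarrow> bilinear_on V \<omega> \<and> (\<forall>x\<in>V. \<omega> x x = 0)"

definition d1 :: "('a \<Rightarrow> 'a \<Rightarrow> 'a) \<Rightarrow> ('a \<Rightarrow> real) \<Rightarrow> 'a \<Rightarrow> 'a \<Rightarrow> real" where
  "d1 B \<eta> x y = - \<eta> (B x y)"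

definition d2 :: "('a \<Rightarrow> 'a \<Rightarrow> 'a) \<Rightarrow> ('a \<Rightarrow> 'a \<Rightarrow> real) \<Rightarrow> 'a \<Rightarrow> 'a \<Rightarrow> 'a \<Rightarrow> real" where
  "d2 B \<omega> x y z = - \<omega> (B x y) z - \<omega> (B y z) x - \<omega> (B z x) y"

text \<open>Wedge products (convention (a wedge b) = (p+q)!/(p!q!) Alt(a tensor b)).\<close>

definition wedge12 :: "('a \<Rightarrow> real) \<Rightarrow> ('a \<Rightarrow> 'a \<Rightarrow> real) \<Rightarrow> 'a \<Rightarrow> 'a \<Rightarrow> 'a \<Rightarrow> real" where
  "wedge12 \<eta> \<omega> x y z = \<eta> x * \<omega> y z + \<eta> y * \<omega> z x + \<eta> z * \<omega> x y"

definition omega_pow :: "('a \<Rightarrow> 'a \<Rightarrow> real) \<Rightarrow> nat \<Rightarrow> (nat \<Rightarrow> 'a) \<Rightarrow> real" where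
  "omega_pow \<omega> n v = (1 / 2 ^ n) *
     (\<Sum>\<sigma> | \<sigma> permutes {..<2*n}. of_int (sign \<sigma>) *
        (\<Prod>i<n. \<omega> (v (\<sigma> (2*i))) (v (\<sigma> (2*i+1)))))"

definition eta_omega_pow :: "('a \<Rightarrow> real) \<Rightarrow> ('a \<Rightarrow> 'a \<Rightarrow> real) \<Rightarrow> nat \<Rightarrow> (nat \<Rightarrow> 'a) \<Rightarrow> real" where
  "eta_omega_pow \<eta> \<omega> n v = (1 / 2 ^ n) *
     (\<Sum>\<sigma> | \<sigma> permutes {..<2*n+1}. of_int (sign \<sigma>) * \<eta> (v (\<sigma> 0)) *
        (\<Prod>i<n. \<omega> (v (\<sigma> (2*i+1))) (v (\<sigma> (2*i+2)))))"

definition nonzero_on :: "'a set \<Rightarrow> nat \<Rightarrow> ((nat \<Rightarrow> 'a) \<Rightarrow> real) \<Rightarrow> bool" where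
  "nonzero_on V k F \<longleftrightarrow> (\<exists>v. (\<forall>i<k. v i \<in> V) \<and> F v \<noteq> 0)"

definition almost_cosymplectic ::
  "'a::real_vector set \<Rightarrow> ('a \<Rightarrow> real) \<Rightarrow> ('a \<Rightarrow> 'a \<Rightarrow> real) \<Rightarrow> nat \<Rightarrow> bool" where
  "almost_cosymplectic V \<eta> \<omega> n \<longleftrightarrow> linear_on V \<eta> \<and> two_form V \<omega>
     \<and> nonzero_on V (2*n+1) (eta_omega_pow \<eta> \<omega> n)"

definition alpha_cosymplectic ::
  "'a::real_vector set \<Rightarrow> ('a \<Rightarrow> 'a \<Rightarrow> 'a) \<Rightarrow> ('a \<Rightarrow> real) \<Rightarrow> ('a \<Rightarrow> 'a \<Rightarrow> real) \<Rightarrow> real \<Rightarrow> nat \<Rightarrow> bool" where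
  "alpha_cosymplectic V B \<eta> \<omega> \<alpha> n \<longleftrightarrow> almost_cosymplectic V \<eta> \<omega> n
     \<and> (\<forall>x\<in>V. \<forall>y\<in>V. d1 B \<eta> x y = 0)
     \<and> (\<forall>x\<in>V. \<forall>y\<in>V. \<forall>z\<in>V. d2 B \<omega> x y z = 2 * \<alpha> * wedge12 \<eta> \<omega> x y z)"

definition reeb :: "'a::real_vector set \<Rightarrow> ('a \<Rightarrow> real) \<Rightarrow> ('a \<Rightarrow> 'a \<Rightarrow> real) \<Rightarrow> 'a \<Rightarrow> bool" where
  "reeb V \<eta> \<omega> \<xi> \<longleftrightarrow> \<xi> \<in> V \<and> \<eta> \<xi> = 1 \<and> (\<forall>y\<in>V. \<omega> \<xi> y = 0)"

definition symplectic ::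
  "'a::real_vector set \<Rightarrow> ('a \<Rightarrow> 'a \<Rightarrow> 'a) \<Rightarrow> ('a \<Rightarrow> 'a \<Rightarrow> real) \<Rightarrow> nat \<Rightarrow> bool" where
  "symplectic H B \<Omega> n \<longleftrightarrow> two_form H \<Omega>
     \<and> (\<forall>x\<in>H. \<forall>y\<in>H. \<forall>z\<in>H. d2 B \<Omega> x y z = 0)
     \<and> nonzero_on H (2*n) (omega_pow \<Omega> n)"

definition derivation :: "'a::real_vector set \<Rightarrow> ('a \<Rightarrow> 'a \<Rightarrow> 'a) \<Rightarrow> ('a \<Rightarrow> 'a) \<Rightarrow> bool" where
  "derivation H B D \<longleftrightarrow> (\<forall>x\<in>H. D x \<in> H) \<and> linear_on H D
     \<and> (\<forall>x\<in>H. \<forall>y\<in>H. D (B x y) = B (D x) y + B x (D y))"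

definition inf_symplectic :: "'a::real_vector set \<Rightarrow> ('a \<Rightarrow> 'a \<Rightarrow> real) \<Rightarrow> ('a \<Rightarrow> 'a) \<Rightarrow> bool" where
  "inf_symplectic H \<Omega> \<theta> \<longleftrightarrow> (\<forall>x\<in>H. \<theta> x \<in> H) \<and> linear_on H \<theta>
     \<and> (\<forall>x\<in>H. \<forall>y\<in>H. \<Omega> (\<theta> x) y = \<Omega> (\<theta> y) x)"

text \<open>The extension g = R xi (+) h built from (h, Omega, D); xi = (1,0).\<close>

definition ext_carrier :: "'b::real_vector set \<Rightarrow> (real \<times> 'b) set" where
  "ext_carrier H = {p. snd p \<in> H}"

definition ext_br :: "('b::real_vector \<Rightarrow> 'b \<Rightarrow> 'b) \<Rightarrow> ('b \<Rightarrow> 'b) \<Rightarrow> real \<times> 'b \<Rightarrow> real \<times> 'b \<Rightarrow> real \<times> 'b" where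
  "ext_br B D p q = (0, B (snd p) (snd q) + fst p *\<^sub>R D (snd q) - fst q *\<^sub>R D (snd p))"

definition ext_eta :: "real \<times> 'b \<Rightarrow> real" where
  "ext_eta p = fst p"

definition ext_omega :: "('b \<Rightarrow> 'b \<Rightarrow> real) \<Rightarrow> real \<times> 'b \<Rightarrow> real \<times> 'b \<Rightarrow> real" where
  "ext_omega \<Omega> p q = \<Omega> (snd p) (snd q)"

end

theory Submission
  imports Defs "Jordan_Normal_Form.Determinant"
begin

text \<open>
  If \<eta> \<and> \<omega>^n does not vanish on v 0, \<dots>, v 2n, these vectors form a basis, and the only
  vector annihilated by both \<eta> and \<omega> is 0. In odd dimension the skew form \<omega> has a nonzero
  radical (its Gram matrix is singular), which \<eta> therefore does not annihilate; normalising gives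
  the unique Reeb vector \<xi>, and V = \<real>\<xi> \<oplus> ker \<eta>. Since d\<eta> = 0, ker \<eta> is a subalgebra, and the
  Jacobi identity with \<xi> makes D = ad \<xi> a derivation of it. Evaluating d\<omega> = 2\<alpha> \<eta> \<and> \<omega> on
  triples in ker \<eta> shows that \<omega> is closed there, and on (\<xi>, x, y) it gives
  \<omega>(Dx, y) - \<omega>(Dy, x) = -2\<alpha> \<omega>(x, y), which is the symmetry of \<omega>((D + \<alpha>)x, y).
  Conversely the same identities make \<real>\<xi> \<oplus> h, with [\<xi>, x] = Dx, a Lie algebra with an
  \<alpha>-cosymplectic structure; non-degeneracy transfers because expanding \<eta> \<and> \<omega>^n along its
  first slot at (\<xi>, w) gives \<Omega>^n(w).
\<close>

lemma linear_on_add: "linear_on V f \<Longrightarrow> x \<in> V \<Longrightarrow> y \<in> V \<Longrightarrow> f (x + y) = f x + f y"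
  unfolding linear_on_def by blast

lemma linear_on_scale: "linear_on V f \<Longrightarrow> x \<in> V \<Longrightarrow> f (c *\<^sub>R x) = c *\<^sub>R f x"
  unfolding linear_on_def by blast

lemma linear_on_subset: "linear_on V f \<Longrightarrow> H \<subseteq> V \<Longrightarrow> linear_on H f"
  unfolding linear_on_def by blast

lemma linear_on_0: "linear_on V f \<Longrightarrow> subspace V \<Longrightarrow> f 0 = 0"
  by (metis linear_on_scale scale_zero_left subspace_0)

lemma linear_on_neg: "linear_on V f \<Longrightarrow> x \<in> V \<Longrightarrow> f (- x) = - f x"
  using linear_on_scale[of V f x "-1"] by simp

lemma linear_on_diff:
  "linear_on V f \<Longrightarrow> subspace V \<Longrightarrow> x \<in> V \<Longrightarrow> y \<in> V \<Longrightarrow> f (x - y) = f x - f y"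
  using linear_on_add[of V f x "- y"] linear_on_neg[of V f y] subspace_neg[of V y] by simp

lemma linear_on_scale_add:
  "linear_on V f \<Longrightarrow> subspace V \<Longrightarrow> x \<in> V \<Longrightarrow> y \<in> V \<Longrightarrow> f (a *\<^sub>R x + y) = a *\<^sub>R f x + f y"
  by (simp add: linear_on_add linear_on_scale subspace_scale)

lemma linear_on_sum:
  assumes f: "linear_on V f" and V: "subspace V" and S: "finite S" and u: "\<And>i. i \<in> S \<Longrightarrow> u i \<in> V"
  shows "f (\<Sum>i\<in>S. c i *\<^sub>R u i) = (\<Sum>i\<in>S. c i *\<^sub>R f (u i))"
  using S u
proof (induction S rule: finite_induct)
  case empty
  then show ?case using linear_on_0[OF f V] by simp
next
  case (insert a S)
  then have "(\<Sum>i\<in>S. c i *\<^sub>R u i) \<in> V"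
    by (intro subspace_sum[OF V] subspace_scale[OF V]) auto
  with insert show ?case by (simp add: linear_on_scale_add[OF f V])
qed

lemma linear_on_cmult:
  fixes f :: "'a::real_vector \<Rightarrow> real"
  shows "linear_on V f \<Longrightarrow> linear_on V (\<lambda>z. c * f z)"
  unfolding linear_on_def by (simp add: algebra_simps)

lemma linear_on_sum_fun:
  "finite S \<Longrightarrow> (\<And>i. i \<in> S \<Longrightarrow> linear_on V (f i)) \<Longrightarrow> linear_on V (\<lambda>z. \<Sum>i\<in>S. f i z)"
  unfolding linear_on_def by (simp add: sum.distrib scaleR_sum_right)

lemma subspace_kernel_on:
  assumes V: "subspace V" and f: "linear_on V f"
  shows "subspace {x\<in>V. f x = 0}"
  using linear_on_0[OF f V] linear_on_add[OF f] linear_on_scale[OF f] V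
  by (auto simp: subspace_def)

lemma bilinear_on_linear_right: "bilinear_on V B \<Longrightarrow> x \<in> V \<Longrightarrow> linear_on V (B x)"
  unfolding bilinear_on_def by blast

lemma bilinear_on_linear_left: "bilinear_on V B \<Longrightarrow> y \<in> V \<Longrightarrow> linear_on V (\<lambda>x. B x y)"
  unfolding bilinear_on_def by blast

lemma bilinear_on_subset: "bilinear_on V B \<Longrightarrow> H \<subseteq> V \<Longrightarrow> bilinear_on H B"
  unfolding bilinear_on_def linear_on_def by blast

lemma bilinear_on_skew:
  assumes B: "bilinear_on V B" and V: "subspace V" and alt: "\<And>z. z \<in> V \<Longrightarrow> B z z = 0"
    and x: "x \<in> V" and y: "y \<in> V"
  shows "B x y = - B y x"
proof -
  have xy: "x + y \<in> V" using subspace_add[OF V x y] .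
  have "0 = B (x + y) (x + y)" using alt xy by simp
  also have "\<dots> = B x (x + y) + B y (x + y)"
    using linear_on_add[OF bilinear_on_linear_left[OF B xy] x y] .
  also have "\<dots> = B x y + B y x"
    using linear_on_add[OF bilinear_on_linear_right[OF B] x y] x y alt by simp
  finally show ?thesis by (simp add: eq_neg_iff_add_eq_0)
qed

lemma two_form_bilinear_on: "two_form V \<omega> \<Longrightarrow> bilinear_on V \<omega>"
  unfolding two_form_def by blast

lemma two_form_subset: "two_form V \<omega> \<Longrightarrow> H \<subseteq> V \<Longrightarrow> two_form H \<omega>"
  unfolding two_form_def using bilinear_on_subset by blast

lemma two_form_skew: "two_form V \<omega> \<Longrightarrow> subspace V \<Longrightarrow> x \<in> V \<Longrightarrow> y \<in> V \<Longrightarrow> \<omega> x y = - \<omega> y x"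
  unfolding two_form_def using bilinear_on_skew by blast

lemma lie_algebra_skew: "lie_algebra V B \<Longrightarrow> x \<in> V \<Longrightarrow> y \<in> V \<Longrightarrow> B x y = - B y x"
  unfolding lie_algebra_def using bilinear_on_skew by blast

section \<open>Alternating multilinear forms\<close>

definition multilinear_on :: "'a::real_vector set \<Rightarrow> nat \<Rightarrow> ((nat \<Rightarrow> 'a) \<Rightarrow> real) \<Rightarrow> bool" where
  "multilinear_on V m G \<longleftrightarrow>
     (\<forall>w s. (\<forall>l<m. w l \<in> V) \<longrightarrow> s < m \<longrightarrow> linear_on V (\<lambda>z. G (w(s := z))))"

definition alternating :: "nat \<Rightarrow> ((nat \<Rightarrow> 'a) \<Rightarrow> real) \<Rightarrow> bool" where
  "alternating m G \<longleftrightarrow> (\<forall>v i j. i < m \<longrightarrow> j < m \<longrightarrow> i \<noteq> j \<longrightarrow> v i = v j \<longrightarrow> G v = 0)"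

definition alternation :: "nat \<Rightarrow> ((nat \<Rightarrow> 'a) \<Rightarrow> real) \<Rightarrow> (nat \<Rightarrow> 'a) \<Rightarrow> real" where
  "alternation m F v = (\<Sum>\<sigma> | \<sigma> permutes {..<m}. of_int (sign \<sigma>) * F (v \<circ> \<sigma>))"

lemma multilinear_onD:
  "multilinear_on V m G \<Longrightarrow> \<forall>l<m. w l \<in> V \<Longrightarrow> s < m \<Longrightarrow> linear_on V (\<lambda>z. G (w(s := z)))"
  unfolding multilinear_on_def by blast

lemma multilinear_on_scale: "multilinear_on V m G \<Longrightarrow> multilinear_on V m (\<lambda>v. a * G v)"
  unfolding multilinear_on_def by (simp add: linear_on_cmult)

lemma alternating_scale: "alternating m G \<Longrightarrow> alternating m (\<lambda>v. a * G v)"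
  unfolding alternating_def by simp

lemma permutes_lessThan_sign_compose:
  "p permutes {..<(m::nat)} \<Longrightarrow> q permutes {..<m} \<Longrightarrow> sign (p \<circ> q) = sign p * sign q"
  by (meson finite_lessThan permutation_permutes sign_compose)

lemma permutes_lessThan_comp_in:
  "\<sigma> permutes {..<m} \<Longrightarrow> \<forall>l<m. w l \<in> V \<Longrightarrow> \<forall>l<m. (w \<circ> \<sigma>) l \<in> V"
  by (metis comp_apply lessThan_iff permutes_in_image)

lemma alternation_comp_permutes:
  assumes \<tau>: "\<tau> permutes {..<m}"
  shows "alternation m F (v \<circ> \<tau>) = of_int (sign \<tau>) * alternation m F v"
proof -
  let ?\<tau>' = "Hilbert_Choice.inv \<tau>"
  have \<tau>': "?\<tau>' permutes {..<m}" using permutes_inv[OF \<tau>] .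
  have "alternation m F (v \<circ> \<tau>)
      = (\<Sum>\<sigma> | \<sigma> permutes {..<m}. of_int (sign (?\<tau>' \<circ> \<sigma>)) * F (v \<circ> \<tau> \<circ> (?\<tau>' \<circ> \<sigma>)))"
    unfolding alternation_def by (rule setum_permutations_compose_left[OF \<tau>'])
  also have "\<dots> = (\<Sum>\<sigma> | \<sigma> permutes {..<m}. of_int (sign \<tau>) * (of_int (sign \<sigma>) * F (v \<circ> \<sigma>)))"
  proof (rule sum.cong[OF refl])
    fix \<sigma> assume "\<sigma> \<in> {\<sigma>. \<sigma> permutes {..<m}}"
    then have "sign (?\<tau>' \<circ> \<sigma>) = sign \<tau> * sign \<sigma>"
      using permutes_lessThan_sign_compose[OF \<tau>'] sign_inverse \<tau>
      by (metis finite_lessThan mem_Collect_eq permutation_permutes)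
    moreover have "v \<circ> \<tau> \<circ> (?\<tau>' \<circ> \<sigma>) = v \<circ> \<sigma>"
      using permutes_inv_o(1)[OF \<tau>] by (metis comp_assoc comp_id)
    ultimately show "of_int (sign (?\<tau>' \<circ> \<sigma>)) * F (v \<circ> \<tau> \<circ> (?\<tau>' \<circ> \<sigma>))
        = of_int (sign \<tau>) * (of_int (sign \<sigma>) * F (v \<circ> \<sigma>))"
      by simp
  qed
  also have "\<dots> = of_int (sign \<tau>) * alternation m F v"
    by (simp add: alternation_def sum_distrib_left)
  finally show ?thesis .
qed

lemma alternating_alternation: "alternating m (alternation m F)"
  unfolding alternating_def
proof (intro allI impI)
  fix v :: "nat \<Rightarrow> 'a" and i j
  assume ij: "i < m" "j < m" "i \<noteq> j" and "v i = v j"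
  then have "v \<circ> Transposition.transpose i j = v"
    by (auto simp: fun_eq_iff Transposition.transpose_def)
  moreover have "Transposition.transpose i j permutes {..<m}"
    using ij by (intro permutes_swap_id) auto
  ultimately have "alternation m F v = - alternation m F v"
    using alternation_comp_permutes[of "Transposition.transpose i j" m F v] ij
    by (simp add: sign_swap_id)
  then show "alternation m F v = 0" by simp
qed

lemma fun_upd_comp_permutes:
  assumes "\<sigma> permutes S"
  shows "v(j := z) \<circ> \<sigma> = (v \<circ> \<sigma>)(Hilbert_Choice.inv \<sigma> j := z)"
proof
  fix k
  show "(v(j := z) \<circ> \<sigma>) k = ((v \<circ> \<sigma>)(Hilbert_Choice.inv \<sigma> j := z)) k"
    using permutes_inv_eq[OF assms, of j k] by (cases "\<sigma> k = j") auto
qed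

lemma multilinear_on_alternation:
  assumes F: "multilinear_on V m F"
  shows "multilinear_on V m (alternation m F)"
  unfolding multilinear_on_def alternation_def
proof (intro allI impI)
  fix w s assume w: "\<forall>l<m. w l \<in> V" and s: "s < m"
  have "linear_on V (\<lambda>z. of_int (sign \<sigma>) * F (w(s := z) \<circ> \<sigma>))" if \<sigma>: "\<sigma> permutes {..<m}" for \<sigma>
  proof -
    have "Hilbert_Choice.inv \<sigma> s < m"
      using s \<sigma> by (metis lessThan_iff permutes_in_image permutes_inv)
    then show ?thesis
      unfolding fun_upd_comp_permutes[OF \<sigma>]
      by (intro linear_on_cmult multilinear_onD[OF F permutes_lessThan_comp_in[OF \<sigma> w]])
  qed
  then show "linear_on V (\<lambda>z. \<Sum>\<sigma> | \<sigma> permutes {..<m}. of_int (sign \<sigma>) * F (w(s := z) \<circ> \<sigma>))"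
    by (intro linear_on_sum_fun) (simp_all add: finite_permutations)
qed

lemma multilinear_on_slot_sum:
  assumes G: "multilinear_on V m G" and V: "subspace V" and v: "\<forall>l<m. v l \<in> V" and j: "j < m"
    and S: "finite S" and u: "\<And>i. i \<in> S \<Longrightarrow> u i \<in> V"
  shows "G (v(j := \<Sum>i\<in>S. c i *\<^sub>R u i)) = (\<Sum>i\<in>S. c i * G (v(j := u i)))"
  using linear_on_sum[OF multilinear_onD[OF G v j] V S u] by simp

lemma alternating_fun_upd_eq:
  "alternating m G \<Longrightarrow> i < m \<Longrightarrow> j < m \<Longrightarrow> i \<noteq> j \<Longrightarrow> G (v(j := v i)) = 0"
  unfolding alternating_def by (metis fun_upd_same fun_upd_other)

lemma alternating_slot_combination:
  assumes G: "multilinear_on V m G" and A: "alternating m G" and V: "subspace V"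
    and v: "\<forall>l<m. v l \<in> V" and j: "j < m"
  shows "G (v(j := \<Sum>i<m. c i *\<^sub>R v i)) = c j * G v"
proof -
  have "G (v(j := \<Sum>i<m. c i *\<^sub>R v i)) = (\<Sum>i<m. c i * G (v(j := v i)))"
    using multilinear_on_slot_sum[OF G V v j, of "{..<m}" v c] v by simp
  also have "\<dots> = (\<Sum>i\<in>{j}. c i * G (v(j := v i)))"
    using j alternating_fun_upd_eq[OF A] by (intro sum.mono_neutral_right) auto
  finally show ?thesis by simp
qed

lemma alternating_nonzero_coeffs_zero:
  assumes G: "multilinear_on V m G" and A: "alternating m G" and V: "subspace V"
    and v: "\<forall>l<m. v l \<in> V" and nz: "G v \<noteq> 0"
    and c: "(\<Sum>i<m. c i *\<^sub>R v i) = 0" and j: "j < m"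
  shows "c j = 0"
proof -
  have "c j * G v = G (v(j := 0))"
    using alternating_slot_combination[OF G A V v j, of c] unfolding c by simp
  also have "\<dots> = 0"
    using linear_on_0[OF multilinear_onD[OF G v j] V] .
  finally show ?thesis using nz by simp
qed

lemma alternating_nonzero_inj:
  "alternating m G \<Longrightarrow> G v \<noteq> 0 \<Longrightarrow> inj_on v {..<m}"
  unfolding alternating_def inj_on_def by blast

lemma alternating_nonzero_independent:
  assumes G: "multilinear_on V m G" and A: "alternating m G" and V: "subspace V"
    and v: "\<forall>l<m. v l \<in> V" and nz: "G v \<noteq> 0"
  shows "independent (v ` {..<m})"
proof
  assume "dependent (v ` {..<m})"
  then obtain u where u: "\<exists>y\<in>v ` {..<m}. u y \<noteq> 0" "(\<Sum>y\<in>v ` {..<m}. u y *\<^sub>R y) = 0"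
    using dependent_finite[of "v ` {..<m}"] by auto
  have "(\<Sum>i<m. u (v i) *\<^sub>R v i) = 0"
    using u(2) sum.reindex[OF alternating_nonzero_inj[OF A nz], of "\<lambda>y. u y *\<^sub>R y"] by simp
  then have "\<forall>j<m. u (v j) = 0"
    using alternating_nonzero_coeffs_zero[OF G A V v nz, of "\<lambda>i. u (v i)"] by blast
  with u(1) show False by blast
qed

lemma independent_card_eq_dim_span:
  assumes "S \<subseteq> V" "independent S" "finite S" "card S = dim V" "0 < dim V"
  shows "V \<subseteq> span S"
proof
  fix x assume x: "x \<in> V"
  obtain B where B: "B \<subseteq> V" "independent B" "V \<subseteq> span B" "card B = dim V"
    by (rule basis_exists)
  have "finite B" using B(4) assms(5) by (intro card_ge_0_finite) simp
  show "x \<in> span S"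
  proof (rule ccontr)
    assume nx: "x \<notin> span S"
    then have "independent (insert x S)" using independent_insertI assms(2) by blast
    moreover have "insert x S \<subseteq> span B" using assms(1) x B(3) by blast
    ultimately have "card (insert x S) \<le> card B"
      using independent_span_bound[OF \<open>finite B\<close>] by blast
    moreover have "x \<notin> S" using nx span_base by blast
    ultimately show False using assms(3,4) B(4) by simp
  qed
qed

lemma alternating_nonzero_spans:
  assumes G: "multilinear_on V m G" and A: "alternating m G" and V: "subspace V"
    and v: "\<forall>l<m. v l \<in> V" and nz: "G v \<noteq> 0" and d: "dim V = m" and m: "0 < m" and x: "x \<in> V"
  shows "\<exists>c. x = (\<Sum>i<m. c i *\<^sub>R v i)"
proof -
  have inj: "inj_on v {..<m}" using alternating_nonzero_inj[OF A nz] .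
  have "V \<subseteq> span (v ` {..<m})"
    using alternating_nonzero_independent[OF G A V v nz] v d m card_image[OF inj]
    by (intro independent_card_eq_dim_span) auto
  then obtain u where "x = (\<Sum>y\<in>v ` {..<m}. u y *\<^sub>R y)"
    using x span_finite[of "v ` {..<m}"] by auto
  then have "x = (\<Sum>i<m. u (v i) *\<^sub>R v i)" by (simp add: sum.reindex[OF inj])
  then show ?thesis by (intro exI[of _ "\<lambda>i. u (v i)"])
qed

lemma alternating_nonzero_slot_zero:
  assumes G: "multilinear_on V m G" and A: "alternating m G" and V: "subspace V"
    and v: "\<forall>l<m. v l \<in> V" and nz: "G v \<noteq> 0" and d: "dim V = m" and m: "0 < m" and x: "x \<in> V"
    and z: "\<forall>j<m. G (v(j := x)) = 0"
  shows "x = 0"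
proof -
  obtain c where c: "x = (\<Sum>i<m. c i *\<^sub>R v i)"
    using alternating_nonzero_spans[OF G A V v nz d m x] by blast
  have "c j * G v = 0" if "j < m" for j
    using alternating_slot_combination[OF G A V v that, of c] z that c by simp
  then show ?thesis using c nz by simp
qed

section \<open>The top forms \<omega>^n and \<eta> \<and> \<omega>^n\<close>

definition omega_monomial :: "('a \<Rightarrow> 'a \<Rightarrow> real) \<Rightarrow> nat \<Rightarrow> (nat \<Rightarrow> 'a) \<Rightarrow> real" where
  "omega_monomial \<omega> n w = (\<Prod>i<n. \<omega> (w (2*i)) (w (2*i+1)))"

definition eta_omega_monomial ::
  "('a \<Rightarrow> real) \<Rightarrow> ('a \<Rightarrow> 'a \<Rightarrow> real) \<Rightarrow> nat \<Rightarrow> (nat \<Rightarrow> 'a) \<Rightarrow> real" where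
  "eta_omega_monomial \<eta> \<omega> n w = \<eta> (w 0) * omega_monomial \<omega> n (w \<circ> Suc)"

lemma omega_pow_eq_alternation:
  "omega_pow \<omega> n v = (1 / 2^n) * alternation (2*n) (omega_monomial \<omega> n) v"
  unfolding omega_pow_def alternation_def omega_monomial_def by simp

lemma eta_omega_pow_eq_alternation:
  "eta_omega_pow \<eta> \<omega> n v = (1 / 2^n) * alternation (2*n+1) (eta_omega_monomial \<eta> \<omega> n) v"
  unfolding eta_omega_pow_def alternation_def eta_omega_monomial_def omega_monomial_def
  by (simp add: mult.assoc numeral_2_eq_2)

lemma multilinear_on_omega_monomial:
  assumes \<omega>: "two_form V \<omega>"
  shows "multilinear_on V (2*n) (omega_monomial \<omega> n)"
  unfolding multilinear_on_def
proof (intro allI impI)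
  fix w :: "nat \<Rightarrow> 'a" and s assume w: "\<forall>l<2*n. w l \<in> V" and s: "s < 2*n"
  define i0 where "i0 = s div 2"
  have i0: "i0 < n" using s by (simp add: i0_def)
  let ?f = "\<lambda>i w. \<omega> (w (2*i)) (w (2*i+1))"
  have eq: "omega_monomial \<omega> n (w(s := z)) = (\<Prod>i\<in>{..<n}-{i0}. ?f i w) * ?f i0 (w(s := z))" for z
  proof -
    have "omega_monomial \<omega> n (w(s := z)) = ?f i0 (w(s := z)) * (\<Prod>i\<in>{..<n}-{i0}. ?f i (w(s := z)))"
      unfolding omega_monomial_def using i0 by (intro prod.remove) auto
    also have "(\<Prod>i\<in>{..<n}-{i0}. ?f i (w(s := z))) = (\<Prod>i\<in>{..<n}-{i0}. ?f i w)"
      by (intro prod.cong) (auto simp: i0_def)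
    finally show ?thesis by (rule trans[OF _ mult.commute])
  qed
  have "linear_on V (\<lambda>z. ?f i0 (w(s := z)))"
  proof (cases "even s")
    case True
    then have "s = 2*i0" by (simp add: i0_def)
    moreover have "w (2*i0+1) \<in> V" using w i0 by simp
    ultimately show ?thesis by (simp add: bilinear_on_linear_left[OF two_form_bilinear_on[OF \<omega>]])
  next
    case False
    then have "s = 2*i0+1" by (simp add: i0_def)
    moreover have "w (2*i0) \<in> V" using w i0 by simp
    ultimately show ?thesis by (simp add: bilinear_on_linear_right[OF two_form_bilinear_on[OF \<omega>]])
  qed
  then show "linear_on V (\<lambda>z. omega_monomial \<omega> n (w(s := z)))"
    unfolding eq by (rule linear_on_cmult)
qed

lemma multilinear_on_eta_omega_monomial:
  assumes \<eta>: "linear_on V \<eta>" and \<omega>: "two_form V \<omega>"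
  shows "multilinear_on V (2*n+1) (eta_omega_monomial \<eta> \<omega> n)"
  unfolding multilinear_on_def
proof (intro allI impI)
  fix w :: "nat \<Rightarrow> 'a" and s assume w: "\<forall>l<2*n+1. w l \<in> V" and s: "s < 2*n+1"
  show "linear_on V (\<lambda>z. eta_omega_monomial \<eta> \<omega> n (w(s := z)))"
  proof (cases s)
    case 0
    have "w(0 := z) \<circ> Suc = w \<circ> Suc" for z by (simp add: fun_eq_iff)
    then show ?thesis
      using 0 linear_on_cmult[OF \<eta>, of "omega_monomial \<omega> n (w \<circ> Suc)"]
      by (simp add: eta_omega_monomial_def mult.commute)
  next
    case (Suc s')
    have "w(s := z) \<circ> Suc = (w \<circ> Suc)(s' := z)" for z using Suc by (simp add: fun_eq_iff)
    moreover have "linear_on V (\<lambda>z. omega_monomial \<omega> n ((w \<circ> Suc)(s' := z)))"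
      using w s Suc by (intro multilinear_onD[OF multilinear_on_omega_monomial[OF \<omega>]]) auto
    ultimately show ?thesis
      using Suc by (simp add: eta_omega_monomial_def linear_on_cmult)
  qed
qed

lemma multilinear_on_eta_omega_pow:
  "linear_on V \<eta> \<Longrightarrow> two_form V \<omega> \<Longrightarrow> multilinear_on V (2*n+1) (eta_omega_pow \<eta> \<omega> n)"
  unfolding eta_omega_pow_eq_alternation[abs_def]
  by (intro multilinear_on_scale multilinear_on_alternation multilinear_on_eta_omega_monomial)

lemma alternating_eta_omega_pow: "alternating (2*n+1) (eta_omega_pow \<eta> \<omega> n)"
  unfolding eta_omega_pow_eq_alternation[abs_def]
  by (intro alternating_scale alternating_alternation)

lemma omega_monomial_radical:
  assumes l: "l < 2*n" and k: "w l = k" and rad: "\<forall>y\<in>V. \<omega> k y = 0 \<and> \<omega> y k = 0"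
    and w: "\<forall>l<2*n. w l \<in> V"
  shows "omega_monomial \<omega> n w = 0"
proof -
  define i0 where "i0 = l div 2"
  have i0: "i0 < n" using l by (simp add: i0_def)
  have "l = 2*i0 \<or> l = 2*i0+1" by (simp add: i0_def) arith
  then have "\<omega> (w (2*i0)) (w (2*i0+1)) = 0" using rad k w i0 by auto
  then show ?thesis unfolding omega_monomial_def using i0 by (intro prod_zero) auto
qed

lemma eta_omega_monomial_radical:
  assumes l: "0 < l" "l < 2*n+1" and k: "w l = k" and rad: "\<forall>y\<in>V. \<omega> k y = 0 \<and> \<omega> y k = 0"
    and w: "\<forall>l<2*n+1. w l \<in> V"
  shows "eta_omega_monomial \<eta> \<omega> n w = 0"
proof -
  have "omega_monomial \<omega> n (w \<circ> Suc) = 0"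
    using l k w by (intro omega_monomial_radical[OF _ _ rad, of "l - 1"]) auto
  then show ?thesis by (simp add: eta_omega_monomial_def)
qed

lemma alternation_fun_upd_zero:
  assumes j: "j < m" and v: "\<forall>l<m. v l \<in> V" and k: "k \<in> V"
    and F: "\<And>w l. \<forall>l<m. w l \<in> V \<Longrightarrow> l < m \<Longrightarrow> w l = k \<Longrightarrow> F w = 0"
  shows "alternation m F (v(j := k)) = 0"
  unfolding alternation_def
proof (rule sum.neutral, rule ballI)
  fix \<sigma> assume "\<sigma> \<in> {\<sigma>. \<sigma> permutes {..<m}}"
  then have \<sigma>: "\<sigma> permutes {..<m}" by simp
  have "Hilbert_Choice.inv \<sigma> j < m" using j \<sigma> by (metis lessThan_iff permutes_in_image permutes_inv)
  moreover have "(v(j := k) \<circ> \<sigma>) (Hilbert_Choice.inv \<sigma> j) = k"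
    using permutes_inverses(1)[OF \<sigma>] by simp
  moreover have "\<forall>l<m. (v(j := k)) l \<in> V" using v k by simp
  ultimately have "F (v(j := k) \<circ> \<sigma>) = 0"
    using F permutes_lessThan_comp_in[OF \<sigma>] by blast
  then show "of_int (sign \<sigma>) * F (v(j := k) \<circ> \<sigma>) = 0" by simp
qed

definition shift_perm :: "(nat \<Rightarrow> nat) \<Rightarrow> nat \<Rightarrow> nat" where
  "shift_perm \<tau> k = (case k of 0 \<Rightarrow> 0 | Suc k' \<Rightarrow> Suc (\<tau> k'))"

definition unshift_perm :: "(nat \<Rightarrow> nat) \<Rightarrow> nat \<Rightarrow> nat" where
  "unshift_perm \<sigma> k = \<sigma> (Suc k) - 1"

lemma shift_perm_0 [simp]: "shift_perm \<tau> 0 = 0"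
  and shift_perm_Suc [simp]: "shift_perm \<tau> (Suc k) = Suc (\<tau> k)"
  unfolding shift_perm_def by simp_all

lemma shift_perm_permutes:
  assumes \<tau>: "\<tau> permutes {..<N}"
  shows "shift_perm \<tau> permutes {..<Suc N}"
proof (rule bij_imp_permutes)
  have inj: "inj_on (shift_perm \<tau>) {..<Suc N}"
  proof (rule inj_onI)
    fix a b assume "shift_perm \<tau> a = shift_perm \<tau> b"
    then show "a = b" using permutes_inj[OF \<tau>] by (cases a; cases b) (auto simp: inj_eq)
  qed
  have "shift_perm \<tau> ` {..<Suc N} \<subseteq> {..<Suc N}"
  proof
    fix y assume "y \<in> shift_perm \<tau> ` {..<Suc N}"
    then obtain k where "k < Suc N" "y = shift_perm \<tau> k" by auto
    then show "y \<in> {..<Suc N}"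
      using permutes_in_image[OF \<tau>] by (cases k) auto
  qed
  then show "bij_betw (shift_perm \<tau>) {..<Suc N} {..<Suc N}"
    unfolding bij_betw_def using inj endo_inj_surj[OF finite_lessThan _ inj] by simp
next
  fix x assume "x \<notin> {..<Suc N}"
  then obtain x' where "x = Suc x'" "x' \<notin> {..<N}" by (cases x) auto
  then show "shift_perm \<tau> x = x" using permutes_not_in[OF \<tau>] by simp
qed

lemma permutes_fix0_Suc_nonzero:
  "\<sigma> permutes {..<Suc N} \<Longrightarrow> \<sigma> 0 = 0 \<Longrightarrow> \<sigma> (Suc k) \<noteq> 0"
  by (metis permutes_inj inj_eq nat.distinct(1))

lemma unshift_perm_permutes:
  assumes \<sigma>: "\<sigma> permutes {..<Suc N}" and \<sigma>0: "\<sigma> 0 = 0"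
  shows "unshift_perm \<sigma> permutes {..<N}"
proof (rule bij_imp_permutes)
  note nz = permutes_fix0_Suc_nonzero[OF \<sigma> \<sigma>0]
  have inj: "inj_on (unshift_perm \<sigma>) {..<N}"
  proof (rule inj_onI)
    fix a b assume "unshift_perm \<sigma> a = unshift_perm \<sigma> b"
    then have "\<sigma> (Suc a) = \<sigma> (Suc b)" unfolding unshift_perm_def using nz[of a] nz[of b] by simp
    then show "a = b" using permutes_inj[OF \<sigma>] by (simp add: inj_eq)
  qed
  have "unshift_perm \<sigma> ` {..<N} \<subseteq> {..<N}"
  proof
    fix y assume "y \<in> unshift_perm \<sigma> ` {..<N}"
    then obtain k where k: "k < N" "y = unshift_perm \<sigma> k" by auto
    then have "\<sigma> (Suc k) < Suc N" using permutes_in_image[OF \<sigma>] by simp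
    then show "y \<in> {..<N}" using k nz[of k] unfolding unshift_perm_def by simp
  qed
  then show "bij_betw (unshift_perm \<sigma>) {..<N} {..<N}"
    unfolding bij_betw_def using inj endo_inj_surj[OF finite_lessThan _ inj] by simp
next
  fix x assume "x \<notin> {..<N}"
  then show "unshift_perm \<sigma> x = x" using permutes_not_in[OF \<sigma>] unfolding unshift_perm_def by simp
qed

lemma shift_unshift_perm:
  assumes \<sigma>: "\<sigma> permutes {..<Suc N}" and \<sigma>0: "\<sigma> 0 = 0"
  shows "shift_perm (unshift_perm \<sigma>) = \<sigma>"
proof
  fix k show "shift_perm (unshift_perm \<sigma>) k = \<sigma> k"
    using permutes_fix0_Suc_nonzero[OF \<sigma> \<sigma>0] \<sigma>0 by (cases k) (auto simp: unshift_perm_def)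
qed

lemma unshift_shift_perm: "unshift_perm (shift_perm \<tau>) = \<tau>"
  by (simp add: unshift_perm_def fun_eq_iff)

lemma sign_shift_perm:
  assumes "\<tau> permutes {..<N}"
  shows "sign (shift_perm \<tau>) = sign \<tau>"
  using assms finite_lessThan
proof (induction rule: permutes_induct)
  case id
  have "shift_perm id = id" by (auto simp: fun_eq_iff shift_perm_def split: nat.split)
  then show ?case by (simp only:)
next
  case (swap a b p)
  let ?t = "Transposition.transpose"
  have "shift_perm (?t a b \<circ> p) = ?t (Suc a) (Suc b) \<circ> shift_perm p"
  proof
    fix k show "shift_perm (?t a b \<circ> p) k = (?t (Suc a) (Suc b) \<circ> shift_perm p) k"
      by (cases k) (auto simp: Transposition.transpose_def)
  qed
  moreover have "?t (Suc a) (Suc b) permutes {..<Suc N}" "?t a b permutes {..<N}"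
    using swap(1,2) by (auto intro: permutes_swap_id)
  ultimately show ?case
    using swap shift_perm_permutes[OF swap(4)]
    by (simp only: permutes_lessThan_sign_compose) (simp add: sign_swap_id)
qed

lemma eta_omega_pow_first_slot:
  assumes Z: "\<And>\<sigma>. \<sigma> permutes {..<2*n+1} \<Longrightarrow> \<sigma> 0 \<noteq> 0 \<Longrightarrow> eta_omega_monomial \<eta> \<omega> n (u \<circ> \<sigma>) = 0"
  shows "eta_omega_pow \<eta> \<omega> n u = \<eta> (u 0) * omega_pow \<omega> n (u \<circ> Suc)"
proof -
  let ?g = "\<lambda>\<sigma>. of_int (sign \<sigma>) * eta_omega_monomial \<eta> \<omega> n (u \<circ> \<sigma>)"
  let ?Q = "{\<sigma>. \<sigma> permutes {..<Suc (2*n)} \<and> \<sigma> 0 = 0}"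
  have "alternation (2*n+1) (eta_omega_monomial \<eta> \<omega> n) u = sum ?g ?Q"
    unfolding alternation_def using Z
    by (intro sum.mono_neutral_right) (auto simp: finite_permutations)
  also have "\<dots> = (\<Sum>\<tau> | \<tau> permutes {..<2*n}. ?g (shift_perm \<tau>))"
    by (rule sum.reindex_bij_witness[where i = shift_perm and j = unshift_perm])
      (auto simp: shift_unshift_perm unshift_shift_perm unshift_perm_permutes shift_perm_permutes)
  also have "\<dots> = (\<Sum>\<tau> | \<tau> permutes {..<2*n}.
      \<eta> (u 0) * (of_int (sign \<tau>) * omega_monomial \<omega> n (u \<circ> Suc \<circ> \<tau>)))"
  proof (rule sum.cong[OF refl])
    fix \<tau> assume "\<tau> \<in> {\<tau>. \<tau> permutes {..<2*n}}"
    moreover have "u \<circ> shift_perm \<tau> \<circ> Suc = u \<circ> Suc \<circ> \<tau>" by (simp add: fun_eq_iff)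
    ultimately show "?g (shift_perm \<tau>) = \<eta> (u 0) * (of_int (sign \<tau>) * omega_monomial \<omega> n (u \<circ> Suc \<circ> \<tau>))"
      by (simp add: eta_omega_monomial_def sign_shift_perm)
  qed
  also have "\<dots> = \<eta> (u 0) * alternation (2*n) (omega_monomial \<omega> n) (u \<circ> Suc)"
    by (simp add: alternation_def sum_distrib_left)
  finally show ?thesis
    unfolding eta_omega_pow_eq_alternation omega_pow_eq_alternation by simp
qed

section \<open>The Reeb vector\<close>

lemma almost_cosymplecticD:
  assumes "almost_cosymplectic V \<eta> \<omega> n"
  shows "linear_on V \<eta>" "two_form V \<omega>"
    "\<exists>v. (\<forall>i<2*n+1. v i \<in> V) \<and> eta_omega_pow \<eta> \<omega> n v \<noteq> 0"
  using assms unfolding almost_cosymplectic_def nonzero_on_def by blast+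

lemma almost_cosymplectic_radical_trivial:
  assumes V: "subspace V" and d: "dim V = 2*n+1" and ac: "almost_cosymplectic V \<eta> \<omega> n"
    and k: "k \<in> V" "\<eta> k = 0" "\<forall>y\<in>V. \<omega> k y = 0"
  shows "k = 0"
proof -
  note \<eta> = almost_cosymplecticD(1)[OF ac] and \<omega> = almost_cosymplecticD(2)[OF ac]
  obtain v where v: "\<forall>i<2*n+1. v i \<in> V" "eta_omega_pow \<eta> \<omega> n v \<noteq> 0"
    using almost_cosymplecticD(3)[OF ac] by blast
  have rad: "\<forall>y\<in>V. \<omega> k y = 0 \<and> \<omega> y k = 0"
    using k(3) two_form_skew[OF \<omega> V _ k(1)] by fastforce
  have "eta_omega_monomial \<eta> \<omega> n w = 0" if "\<forall>l<2*n+1. w l \<in> V" "l < 2*n+1" "w l = k" for w l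
  proof (cases "l = 0")
    case True
    then show ?thesis using that k(2) by (simp add: eta_omega_monomial_def)
  next
    case False
    then show ?thesis using that by (intro eta_omega_monomial_radical[OF _ _ _ rad]) auto
  qed
  then have zero: "\<forall>j<2*n+1. eta_omega_pow \<eta> \<omega> n (v(j := k)) = 0"
    using alternation_fun_upd_zero[OF _ v(1) k(1)] by (simp add: eta_omega_pow_eq_alternation)
  show ?thesis
    by (rule alternating_nonzero_slot_zero[OF multilinear_on_eta_omega_pow[OF \<eta> \<omega>]
          alternating_eta_omega_pow V v d _ k(1) zero]) simp
qed

lemma skew_matrix_odd_kernel:
  fixes A :: "real mat"
  assumes A: "A \<in> carrier_mat m m" and m: "odd m" and skew: "transpose_mat A = -1 \<cdot>\<^sub>m A"
  shows "\<exists>c. c \<in> carrier_vec m \<and> c \<noteq> 0\<^sub>v m \<and> A *\<^sub>v c = 0\<^sub>v m"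
proof -
  have "Determinant.det A = Determinant.det (transpose_mat A)" using det_transpose[OF A] by simp
  also have "\<dots> = - Determinant.det A" using skew A m by simp
  finally have "Determinant.det A = 0" by simp
  then show ?thesis using det_0_iff_vec_prod_zero[OF A] by blast
qed

lemma two_form_radical_from_basis:
  assumes V: "subspace V" and \<omega>: "two_form V \<omega>" and v: "\<forall>i<(m::nat). v i \<in> V"
    and span: "\<And>y. y \<in> V \<Longrightarrow> \<exists>e. y = (\<Sum>i<m. e i *\<^sub>R v i)"
    and x: "x \<in> V" and vx: "\<And>i. i < m \<Longrightarrow> \<omega> (v i) x = 0"
  shows "\<forall>y\<in>V. \<omega> x y = 0"
proof
  fix y assume y: "y \<in> V"
  obtain e where e: "y = (\<Sum>i<m. e i *\<^sub>R v i)" using span[OF y] by blast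
  have "\<omega> y x = (\<Sum>i<m. e i *\<^sub>R \<omega> (v i) x)"
    unfolding e using v
    by (intro linear_on_sum[OF bilinear_on_linear_left[OF two_form_bilinear_on[OF \<omega>] x] V]) auto
  then show "\<omega> x y = 0" using vx two_form_skew[OF \<omega> V x y] by simp
qed

text \<open>The Gram matrix of \<omega> in the basis v is skew of odd size, hence singular.\<close>

lemma two_form_odd_radical:
  assumes V: "subspace V" and \<omega>: "two_form V \<omega>" and m: "odd (m::nat)" and v: "\<forall>i<m. v i \<in> V"
    and span: "\<And>y. y \<in> V \<Longrightarrow> \<exists>e. y = (\<Sum>i<m. e i *\<^sub>R v i)"
    and indep: "\<And>c j. (\<Sum>i<m. c i *\<^sub>R v i) = 0 \<Longrightarrow> j < m \<Longrightarrow> c j = 0"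
  shows "\<exists>x\<in>V. x \<noteq> 0 \<and> (\<forall>y\<in>V. \<omega> x y = 0)"
proof -
  define A where "A = mat m m (\<lambda>(i, j). \<omega> (v i) (v j))"
  have A: "A \<in> carrier_mat m m" by (simp add: A_def)
  have "transpose_mat A = -1 \<cdot>\<^sub>m A"
  proof (rule eq_matI)
    fix i j assume "i < dim_row (-1 \<cdot>\<^sub>m A)" "j < dim_col (-1 \<cdot>\<^sub>m A)"
    then have "i < m" "j < m" by (auto simp: A_def)
    then show "transpose_mat A $$ (i, j) = (-1 \<cdot>\<^sub>m A) $$ (i, j)"
      using two_form_skew[OF \<omega> V, of "v j" "v i"] v by (simp add: A_def)
  qed (auto simp: A_def)
  then obtain c where c: "c \<in> carrier_vec m" "c \<noteq> 0\<^sub>v m" "A *\<^sub>v c = 0\<^sub>v m"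
    using skew_matrix_odd_kernel[OF A m] by blast
  define x where "x = (\<Sum>j<m. c $ j *\<^sub>R v j)"
  have x: "x \<in> V" unfolding x_def using v by (intro subspace_sum[OF V] subspace_scale[OF V]) auto
  have vx: "\<omega> (v i) x = 0" if i: "i < m" for i
  proof -
    have "v i \<in> V" using v i by simp
    then have "\<omega> (v i) x = (\<Sum>j<m. c $ j *\<^sub>R \<omega> (v i) (v j))"
      unfolding x_def using v
      by (intro linear_on_sum[OF bilinear_on_linear_right[OF two_form_bilinear_on[OF \<omega>]] V]) auto
    also have "\<dots> = (A *\<^sub>v c) $ i"
      using i c(1) by (simp add: A_def scalar_prod_def atLeast0LessThan mult.commute)
    finally show ?thesis using c(3) i by simp
  qed
  have "\<forall>y\<in>V. \<omega> x y = 0" using two_form_radical_from_basis[OF V \<omega> v span x vx] .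
  moreover have "x \<noteq> 0"
  proof
    assume "x = 0"
    then have "c $ j = 0" if "j < m" for j using indep[of "\<lambda>j. c $ j"] that by (simp add: x_def)
    then have "c = 0\<^sub>v m" using c(1) by (intro eq_vecI) auto
    with c(2) show False by simp
  qed
  ultimately show ?thesis using x by blast
qed

lemma reeb_exists:
  assumes V: "subspace V" and d: "dim V = 2*n+1" and ac: "almost_cosymplectic V \<eta> \<omega> n"
  shows "\<exists>\<xi>. reeb V \<eta> \<omega> \<xi>"
proof -
  note \<eta> = almost_cosymplecticD(1)[OF ac] and \<omega> = almost_cosymplecticD(2)[OF ac]
  obtain v where v: "\<forall>i<2*n+1. v i \<in> V" "eta_omega_pow \<eta> \<omega> n v \<noteq> 0"
    using almost_cosymplecticD(3)[OF ac] by blast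
  note G = multilinear_on_eta_omega_pow[OF \<eta> \<omega>] alternating_eta_omega_pow
  have m: "0 < 2*n+1" "odd (2*n+1)" by simp_all
  obtain x where x: "x \<in> V" "x \<noteq> 0" "\<forall>y\<in>V. \<omega> x y = 0"
    using two_form_odd_radical[OF V \<omega> m(2) v(1)] alternating_nonzero_spans[OF G V v d m(1)]
      alternating_nonzero_coeffs_zero[OF G V v] by blast
  then have "\<eta> x \<noteq> 0" using almost_cosymplectic_radical_trivial[OF V d ac] by blast
  then have "reeb V \<eta> \<omega> ((1 / \<eta> x) *\<^sub>R x)"
    using x subspace_scale[OF V] linear_on_scale[OF \<eta>]
      linear_on_scale[OF bilinear_on_linear_left[OF two_form_bilinear_on[OF \<omega>]]]
    by (simp add: reeb_def)
  then show ?thesis by blast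
qed

lemma reeb_unique:
  assumes V: "subspace V" and d: "dim V = 2*n+1" and ac: "almost_cosymplectic V \<eta> \<omega> n"
    and \<xi>1: "reeb V \<eta> \<omega> \<xi>1" and \<xi>2: "reeb V \<eta> \<omega> \<xi>2"
  shows "\<xi>1 = \<xi>2"
proof -
  note \<eta> = almost_cosymplecticD(1)[OF ac] and \<omega> = almost_cosymplecticD(2)[OF ac]
  have \<xi>: "\<xi>1 \<in> V" "\<xi>2 \<in> V" using \<xi>1 \<xi>2 by (auto simp: reeb_def)
  have "\<eta> (\<xi>1 - \<xi>2) = 0" using linear_on_diff[OF \<eta> V \<xi>] \<xi>1 \<xi>2 by (simp add: reeb_def)
  moreover have "\<forall>y\<in>V. \<omega> (\<xi>1 - \<xi>2) y = 0"
    using linear_on_diff[OF bilinear_on_linear_left[OF two_form_bilinear_on[OF \<omega>]] V \<xi>] \<xi>1 \<xi>2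
    by (simp add: reeb_def)
  ultimately have "\<xi>1 - \<xi>2 = 0"
    using almost_cosymplectic_radical_trivial[OF V d ac subspace_diff[OF V \<xi>]] by blast
  then show ?thesis by simp
qed

lemma ex1_reeb:
  "subspace V \<Longrightarrow> dim V = 2*n+1 \<Longrightarrow> almost_cosymplectic V \<eta> \<omega> n \<Longrightarrow> \<exists>!\<xi>. reeb V \<eta> \<omega> \<xi>"
  using reeb_exists reeb_unique by blast

section \<open>The kernel of \<eta>\<close>

lemma kernel_projection:
  fixes \<eta> :: "'a::real_vector \<Rightarrow> real"
  assumes V: "subspace V" and \<eta>: "linear_on V \<eta>" and \<xi>: "\<xi> \<in> V" "\<eta> \<xi> = 1" and x: "x \<in> V"
  shows "x - \<eta> x *\<^sub>R \<xi> \<in> {x\<in>V. \<eta> x = 0}"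
  using subspace_diff[OF V x subspace_scale[OF V \<xi>(1)]]
    linear_on_diff[OF \<eta> V x subspace_scale[OF V \<xi>(1)]] linear_on_scale[OF \<eta> \<xi>(1)] \<xi>(2)
  by simp

lemma dim_kernel_on:
  fixes \<eta> :: "'a::real_vector \<Rightarrow> real"
  assumes V: "subspace V" and d: "dim V = Suc N" and \<eta>: "linear_on V \<eta>"
    and \<xi>: "\<xi> \<in> V" "\<eta> \<xi> = 1"
  shows "dim {x\<in>V. \<eta> x = 0} = N"
proof -
  let ?H = "{x\<in>V. \<eta> x = 0}"
  obtain BV where BV: "BV \<subseteq> V" "independent BV" "V \<subseteq> span BV" "card BV = dim V"
    by (rule basis_exists)
  obtain BH where BH: "BH \<subseteq> ?H" "independent BH" "?H \<subseteq> span BH" "card BH = dim ?H"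
    by (rule basis_exists)
  have "finite BV" using BV(4) d by (intro card_ge_0_finite) simp
  moreover have "BH \<subseteq> span BV" using BH(1) BV(3) by blast
  ultimately have "finite BH" using independent_span_bound[OF _ BH(2)] by blast
  have "span BH \<subseteq> ?H" using BH(1) subspace_kernel_on[OF V \<eta>] by (rule span_minimal)
  have "\<xi> \<notin> span BH"
  proof
    assume "\<xi> \<in> span BH"
    then have "\<eta> \<xi> = 0" using \<open>span BH \<subseteq> ?H\<close> by blast
    with \<xi>(2) show False by simp
  qed
  then have indep: "independent (insert \<xi> BH)" "\<xi> \<notin> BH"
    using independent_insertI[OF _ BH(2)] span_base by blast+
  have "V \<subseteq> span (insert \<xi> BH)"
  proof
    fix x assume x: "x \<in> V"
    have "\<eta> x *\<^sub>R \<xi> \<in> span (insert \<xi> BH)" by (simp add: span_base span_scale)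
    moreover have "x - \<eta> x *\<^sub>R \<xi> \<in> span (insert \<xi> BH)"
      using kernel_projection[OF V \<eta> \<xi> x] BH(3) span_mono[of BH "insert \<xi> BH"] by blast
    ultimately have "\<eta> x *\<^sub>R \<xi> + (x - \<eta> x *\<^sub>R \<xi>) \<in> span (insert \<xi> BH)" by (rule span_add)
    then show "x \<in> span (insert \<xi> BH)" by simp
  qed
  then have "dim V = Suc (dim ?H)"
    using dim_unique[OF _ _ indep(1)] BH(1) \<xi>(1) \<open>finite BH\<close> indep(2) BH(4) by auto
  then show ?thesis using d by simp
qed

lemma two_form_radical_shift:
  assumes \<omega>: "two_form V \<omega>" and V: "subspace V" and a: "a \<in> V" and b: "b \<in> V" and \<xi>: "\<xi> \<in> V"
    and rad: "\<forall>y\<in>V. \<omega> \<xi> y = 0 \<and> \<omega> y \<xi> = 0"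
  shows "\<omega> (a - p *\<^sub>R \<xi>) (b - q *\<^sub>R \<xi>) = \<omega> a b"
proof -
  note lin = bilinear_on_linear_left[OF two_form_bilinear_on[OF \<omega>]]
    bilinear_on_linear_right[OF two_form_bilinear_on[OF \<omega>]]
  have b': "b - q *\<^sub>R \<xi> \<in> V" using subspace_diff[OF V b subspace_scale[OF V \<xi>]] .
  have "\<omega> (a - p *\<^sub>R \<xi>) (b - q *\<^sub>R \<xi>) = \<omega> a (b - q *\<^sub>R \<xi>)"
    using linear_on_diff[OF lin(1)[OF b'] V a subspace_scale[OF V \<xi>]]
      linear_on_scale[OF lin(1)[OF b'] \<xi>] rad b' by simp
  also have "\<dots> = \<omega> a b"
    using linear_on_diff[OF lin(2)[OF a] V b subspace_scale[OF V \<xi>]]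
      linear_on_scale[OF lin(2)[OF a] \<xi>] rad a by simp
  finally show ?thesis .
qed

lemma omega_pow_radical_shift:
  assumes \<omega>: "two_form V \<omega>" and V: "subspace V" and \<xi>: "\<xi> \<in> V"
    and rad: "\<forall>y\<in>V. \<omega> \<xi> y = 0 \<and> \<omega> y \<xi> = 0" and w: "\<forall>i<2*n. w i \<in> V"
  shows "omega_pow \<omega> n (\<lambda>i. w i - c i *\<^sub>R \<xi>) = omega_pow \<omega> n w"
proof -
  have "\<omega> (w (\<sigma> j) - c (\<sigma> j) *\<^sub>R \<xi>) (w (\<sigma> k) - c (\<sigma> k) *\<^sub>R \<xi>) = \<omega> (w (\<sigma> j)) (w (\<sigma> k))"
    if "\<sigma> permutes {..<2*n}" "j < 2*n" "k < 2*n" for \<sigma> j k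
    using that w permutes_in_image[OF that(1)]
    by (intro two_form_radical_shift[OF \<omega> V _ _ \<xi> rad]) auto
  then show ?thesis
    unfolding omega_pow_def by (intro arg_cong[where f = "\<lambda>s. 1 / 2^n * s"] sum.cong prod.cong refl) auto
qed

lemma eta_omega_pow_nonzero_at_reeb:
  assumes V: "subspace V" and d: "dim V = 2*n+1" and ac: "almost_cosymplectic V \<eta> \<omega> n"
    and \<xi>: "\<xi> \<in> V" "\<eta> \<xi> = 1"
  obtains u where "\<forall>i<2*n+1. u i \<in> V" "u 0 = \<xi>" "eta_omega_pow \<eta> \<omega> n u \<noteq> 0"
proof -
  note \<eta> = almost_cosymplecticD(1)[OF ac] and \<omega> = almost_cosymplecticD(2)[OF ac]
  note G = multilinear_on_eta_omega_pow[OF \<eta> \<omega>] alternating_eta_omega_pow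
  obtain v where v: "\<forall>i<2*n+1. v i \<in> V" "eta_omega_pow \<eta> \<omega> n v \<noteq> 0"
    using almost_cosymplecticD(3)[OF ac] by blast
  have "(\<forall>j<2*n+1. eta_omega_pow \<eta> \<omega> n (v(j := \<xi>)) = 0) \<Longrightarrow> \<xi> = 0"
    by (rule alternating_nonzero_slot_zero[OF G V v d _ \<xi>(1)]) (simp, assumption)
  moreover have "\<xi> \<noteq> 0" using \<xi>(2) linear_on_0[OF \<eta> V] by auto
  ultimately obtain j where j: "j < 2*n+1" "eta_omega_pow \<eta> \<omega> n (v(j := \<xi>)) \<noteq> 0"
    by blast
  let ?t = "Transposition.transpose 0 j"
  have t: "?t permutes {..<2*n+1}" using j(1) by (intro permutes_swap_id) auto
  show thesis
  proof
    have "\<forall>l<2*n+1. (v(j := \<xi>)) l \<in> V" using v(1) \<xi>(1) by simp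
    then show "\<forall>i<2*n+1. (v(j := \<xi>) \<circ> ?t) i \<in> V" by (rule permutes_lessThan_comp_in[OF t])
    show "(v(j := \<xi>) \<circ> ?t) 0 = \<xi>" by simp
    have "sign ?t = 1 \<or> sign ?t = -1" by (simp add: sign_swap_id)
    then show "eta_omega_pow \<eta> \<omega> n (v(j := \<xi>) \<circ> ?t) \<noteq> 0"
      using j(2) alternation_comp_permutes[OF t, of "eta_omega_monomial \<eta> \<omega> n" "v(j := \<xi>)"]
      by (auto simp: eta_omega_pow_eq_alternation)
  qed
qed

lemma omega_pow_nonzero_on_kernel:
  assumes V: "subspace V" and d: "dim V = 2*n+1" and ac: "almost_cosymplectic V \<eta> \<omega> n"
    and \<xi>: "reeb V \<eta> \<omega> \<xi>"
  shows "nonzero_on {x\<in>V. \<eta> x = 0} (2*n) (omega_pow \<omega> n)"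
proof -
  note \<eta> = almost_cosymplecticD(1)[OF ac] and \<omega> = almost_cosymplecticD(2)[OF ac]
  have \<xi>V: "\<xi> \<in> V" "\<eta> \<xi> = 1" using \<xi> by (simp_all add: reeb_def)
  have rad: "\<forall>y\<in>V. \<omega> \<xi> y = 0 \<and> \<omega> y \<xi> = 0"
    using \<xi> two_form_skew[OF \<omega> V _ \<xi>V(1)] by (fastforce simp: reeb_def)
  obtain u where u: "\<forall>i<2*n+1. u i \<in> V" "u 0 = \<xi>" "eta_omega_pow \<eta> \<omega> n u \<noteq> 0"
    using eta_omega_pow_nonzero_at_reeb[OF V d ac \<xi>V] by blast
  have "eta_omega_monomial \<eta> \<omega> n (u \<circ> \<sigma>) = 0" if \<sigma>: "\<sigma> permutes {..<2*n+1}" "\<sigma> 0 \<noteq> 0" for \<sigma>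
  proof (rule eta_omega_monomial_radical[OF _ _ _ rad])
    show "0 < Hilbert_Choice.inv \<sigma> 0" "Hilbert_Choice.inv \<sigma> 0 < 2*n+1"
      using \<sigma> permutes_inverses(1)[OF \<sigma>(1)] permutes_in_image[OF permutes_inv[OF \<sigma>(1)], of 0]
      by (metis gr0I, simp)
    show "(u \<circ> \<sigma>) (Hilbert_Choice.inv \<sigma> 0) = \<xi>" using u(2) permutes_inverses(1)[OF \<sigma>(1)] by simp
    show "\<forall>l<2*n+1. (u \<circ> \<sigma>) l \<in> V" using permutes_lessThan_comp_in[OF \<sigma>(1) u(1)] .
  qed
  then have "omega_pow \<omega> n (u \<circ> Suc) \<noteq> 0"
    using u(3) eta_omega_pow_first_slot[of n \<eta> \<omega> u] u(2) \<xi>V(2) by simp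
  moreover have "omega_pow \<omega> n (\<lambda>i. (u \<circ> Suc) i - \<eta> ((u \<circ> Suc) i) *\<^sub>R \<xi>) = omega_pow \<omega> n (u \<circ> Suc)"
    using u(1) by (intro omega_pow_radical_shift[OF \<omega> V \<xi>V(1) rad]) auto
  moreover have "\<forall>i<2*n. (u \<circ> Suc) i - \<eta> ((u \<circ> Suc) i) *\<^sub>R \<xi> \<in> {x\<in>V. \<eta> x = 0}"
    using u(1) kernel_projection[OF V \<eta> \<xi>V] by simp
  ultimately show ?thesis unfolding nonzero_on_def by (metis (no_types, lifting))
qed

section \<open>From \<alpha>-cosymplectic to symplectic Lie algebras\<close>

lemma inf_symplectic_shift_iff:
  assumes H: "subspace H" and \<Omega>: "two_form H \<Omega>" and DH: "\<forall>x\<in>H. D x \<in> H" and D: "linear_on H D"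
  shows "inf_symplectic H \<Omega> (\<lambda>x. D x + \<alpha> *\<^sub>R x) \<longleftrightarrow>
    (\<forall>x\<in>H. \<forall>y\<in>H. \<Omega> (D x) y - \<Omega> (D y) x = - 2 * \<alpha> * \<Omega> x y)"
proof -
  have expand: "\<Omega> (D x + \<alpha> *\<^sub>R x) y = \<Omega> (D x) y + \<alpha> * \<Omega> x y" if "x \<in> H" "y \<in> H" for x y
    using that DH subspace_scale[OF H] linear_on_scale
      linear_on_add[OF bilinear_on_linear_left[OF two_form_bilinear_on[OF \<Omega>]]]
    by (simp add: linear_on_scale[OF bilinear_on_linear_left[OF two_form_bilinear_on[OF \<Omega>]]])
  have "\<Omega> (D x + \<alpha> *\<^sub>R x) y = \<Omega> (D y + \<alpha> *\<^sub>R y) x \<longleftrightarrow>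
      \<Omega> (D x) y - \<Omega> (D y) x = - 2 * \<alpha> * \<Omega> x y" if "x \<in> H" "y \<in> H" for x y
    using expand[OF that] expand[OF that(2,1)] two_form_skew[OF \<Omega> H that(2,1)]
    by (auto simp: algebra_simps)
  moreover have "(\<forall>x\<in>H. D x + \<alpha> *\<^sub>R x \<in> H) \<and> linear_on H (\<lambda>x. D x + \<alpha> *\<^sub>R x)"
    using DH D subspace_add[OF H] subspace_scale[OF H]
    by (auto simp: linear_on_def algebra_simps)
  ultimately show ?thesis
    unfolding inf_symplectic_def by blast
qed

locale alpha_cosymplectic_reeb =
  fixes V :: "'a::real_vector set" and B :: "'a \<Rightarrow> 'a \<Rightarrow> 'a" and \<eta> :: "'a \<Rightarrow> real"
    and \<omega> :: "'a \<Rightarrow> 'a \<Rightarrow> real" and \<alpha> :: real and n :: nat and \<xi> :: 'a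
  assumes lie: "lie_algebra V B" and dim_V: "dim V = 2*n+1"
    and cosymplectic: "alpha_cosymplectic V B \<eta> \<omega> \<alpha> n" and reeb: "reeb V \<eta> \<omega> \<xi>"
begin

abbreviation kernel :: "'a set" where "kernel \<equiv> {x \<in> V. \<eta> x = 0}"

lemma subspace_V: "subspace V"
  and bracket_in: "x \<in> V \<Longrightarrow> y \<in> V \<Longrightarrow> B x y \<in> V"
  and bracket_bilinear: "bilinear_on V B"
  and jacobi: "x \<in> V \<Longrightarrow> y \<in> V \<Longrightarrow> z \<in> V \<Longrightarrow> B x (B y z) + B y (B z x) + B z (B x y) = 0"
  using lie unfolding lie_algebra_def by blast+

lemma almost_cosymplectic_V: "almost_cosymplectic V \<eta> \<omega> n"
  and eta_bracket: "x \<in> V \<Longrightarrow> y \<in> V \<Longrightarrow> \<eta> (B x y) = 0"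
  and d2_omega: "x \<in> V \<Longrightarrow> y \<in> V \<Longrightarrow> z \<in> V \<Longrightarrow> d2 B \<omega> x y z = 2 * \<alpha> * wedge12 \<eta> \<omega> x y z"
  using cosymplectic unfolding alpha_cosymplectic_def d1_def by auto

lemmas eta_linear = almost_cosymplecticD(1)[OF almost_cosymplectic_V]
lemmas omega_two_form = almost_cosymplecticD(2)[OF almost_cosymplectic_V]
lemmas omega_linear_left = bilinear_on_linear_left[OF two_form_bilinear_on[OF omega_two_form]]
lemmas omega_linear_right = bilinear_on_linear_right[OF two_form_bilinear_on[OF omega_two_form]]

lemma reeb_in: "\<xi> \<in> V" and eta_reeb: "\<eta> \<xi> = 1" and omega_reeb_left: "y \<in> V \<Longrightarrow> \<omega> \<xi> y = 0"
  using reeb unfolding reeb_def by blast+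

lemma omega_reeb_right: "y \<in> V \<Longrightarrow> \<omega> y \<xi> = 0"
  using two_form_skew[OF omega_two_form subspace_V _ reeb_in] omega_reeb_left by simp

lemma lie_algebra_kernel: "lie_algebra kernel B"
  using lie subspace_kernel_on[OF subspace_V eta_linear] bilinear_on_subset[OF bracket_bilinear]
    bracket_in eta_bracket
  unfolding lie_algebra_def by auto

lemma dim_kernel: "dim kernel = 2*n"
  using dim_kernel_on[OF subspace_V _ eta_linear reeb_in eta_reeb] dim_V by simp

lemma symplectic_kernel: "symplectic kernel B \<omega> n"
  unfolding symplectic_def
  using two_form_subset[OF omega_two_form] d2_omega
    omega_pow_nonzero_on_kernel[OF subspace_V dim_V almost_cosymplectic_V reeb]
  by (auto simp: wedge12_def)

lemma derivation_ad_reeb: "derivation kernel B (B \<xi>)"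
  unfolding derivation_def
proof (intro conjI ballI)
  fix x assume "x \<in> kernel"
  then show "B \<xi> x \<in> kernel" using bracket_in eta_bracket reeb_in by simp
next
  show "linear_on kernel (B \<xi>)"
    by (rule linear_on_subset[OF bilinear_on_linear_right[OF bracket_bilinear reeb_in]]) auto
next
  fix x y assume "x \<in> kernel" "y \<in> kernel"
  then have x: "x \<in> V" and y: "y \<in> V" by simp_all
  have "B \<xi> (B x y) = - B x (B y \<xi>) - B y (B \<xi> x)"
    using jacobi[OF reeb_in x y] by (simp add: eq_neg_iff_add_eq_0 algebra_simps)
  also have "B x (B y \<xi>) = - B x (B \<xi> y)"
    using lie_algebra_skew[OF lie y reeb_in] bracket_in[OF reeb_in y]
      linear_on_neg[OF bilinear_on_linear_right[OF bracket_bilinear x]]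
    by simp
  also have "B y (B \<xi> x) = - B (B \<xi> x) y"
    using lie_algebra_skew[OF lie y bracket_in[OF reeb_in x]] .
  finally show "B \<xi> (B x y) = B (B \<xi> x) y + B x (B \<xi> y)" by simp
qed

text \<open>This is d\<omega> = 2\<alpha> \<eta> \<and> \<omega> evaluated at (\<xi>, x, y).\<close>

lemma omega_ad_reeb:
  assumes "x \<in> kernel" "y \<in> kernel"
  shows "\<omega> (B \<xi> x) y - \<omega> (B \<xi> y) x = - 2 * \<alpha> * \<omega> x y"
proof -
  have x: "x \<in> V" "\<eta> x = 0" and y: "y \<in> V" "\<eta> y = 0" using assms by simp_all
  have "\<omega> (B y \<xi>) x = - \<omega> (B \<xi> y) x"
    using lie_algebra_skew[OF lie y(1) reeb_in] bracket_in[OF reeb_in y(1)]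
      linear_on_neg[OF omega_linear_left[OF x(1)]]
    by simp
  moreover have "\<omega> (B x y) \<xi> = 0" using omega_reeb_right bracket_in x y by simp
  ultimately show ?thesis
    using d2_omega[OF reeb_in x(1) y(1)] x y eta_reeb
    by (simp add: d2_def wedge12_def)
qed

lemma inf_symplectic_ad_reeb: "inf_symplectic kernel \<omega> (\<lambda>x. B \<xi> x + \<alpha> *\<^sub>R x)"
  using inf_symplectic_shift_iff[OF subspace_kernel_on[OF subspace_V eta_linear]
      two_form_subset[OF omega_two_form]] derivation_ad_reeb omega_ad_reeb
  unfolding derivation_def by auto

lemma bij_betw_splitting: "bij_betw (\<lambda>p. fst p *\<^sub>R \<xi> + snd p) (ext_carrier kernel) V"
proof (rule bij_betw_byWitness[where f' = "\<lambda>x. (\<eta> x, x - \<eta> x *\<^sub>R \<xi>)"])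
  show "\<forall>p\<in>ext_carrier kernel. (\<eta> (fst p *\<^sub>R \<xi> + snd p), fst p *\<^sub>R \<xi> + snd p - \<eta> (fst p *\<^sub>R \<xi> + snd p) *\<^sub>R \<xi>) = p"
  proof
    fix p assume "p \<in> ext_carrier kernel"
    then have "\<eta> (fst p *\<^sub>R \<xi> + snd p) = fst p"
      using linear_on_scale_add[OF eta_linear subspace_V reeb_in, of "snd p"] eta_reeb
      by (simp add: ext_carrier_def)
    then show "(\<eta> (fst p *\<^sub>R \<xi> + snd p), fst p *\<^sub>R \<xi> + snd p - \<eta> (fst p *\<^sub>R \<xi> + snd p) *\<^sub>R \<xi>) = p"
      by (simp add: prod_eq_iff)
  qed
  show "(\<lambda>p. fst p *\<^sub>R \<xi> + snd p) ` ext_carrier kernel \<subseteq> V"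
    using subspace_add[OF subspace_V subspace_scale[OF subspace_V reeb_in]] by (auto simp: ext_carrier_def)
  show "(\<lambda>x. (\<eta> x, x - \<eta> x *\<^sub>R \<xi>)) ` V \<subseteq> ext_carrier kernel"
    using kernel_projection[OF subspace_V eta_linear reeb_in eta_reeb] by (auto simp: ext_carrier_def)
qed simp

lemma splitting_hom:
  assumes p: "p \<in> ext_carrier kernel" and q: "q \<in> ext_carrier kernel"
  shows "fst (ext_br B (B \<xi>) p q) *\<^sub>R \<xi> + snd (ext_br B (B \<xi>) p q)
      = B (fst p *\<^sub>R \<xi> + snd p) (fst q *\<^sub>R \<xi> + snd q)"
    and "\<eta> (fst p *\<^sub>R \<xi> + snd p) = ext_eta p"
    and "\<omega> (fst p *\<^sub>R \<xi> + snd p) (fst q *\<^sub>R \<xi> + snd q) = ext_omega \<omega> p q"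
proof -
  obtain a x b y where pq: "p = (a, x)" "q = (b, y)" by fastforce
  have x: "x \<in> V" "\<eta> x = 0" and y: "y \<in> V" "\<eta> y = 0"
    using p q pq by (auto simp: ext_carrier_def)
  have q_in: "b *\<^sub>R \<xi> + y \<in> V" using subspace_add[OF subspace_V subspace_scale[OF subspace_V reeb_in] y(1)] .
  have "B (a *\<^sub>R \<xi> + x) (b *\<^sub>R \<xi> + y) = a *\<^sub>R B \<xi> (b *\<^sub>R \<xi> + y) + B x (b *\<^sub>R \<xi> + y)"
    using linear_on_scale_add[OF bilinear_on_linear_left[OF bracket_bilinear q_in] subspace_V reeb_in x(1)] .
  also have "B \<xi> (b *\<^sub>R \<xi> + y) = B \<xi> y"
    using linear_on_scale_add[OF bilinear_on_linear_right[OF bracket_bilinear reeb_in] subspace_V reeb_in y(1)]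
      lie reeb_in by (simp add: lie_algebra_def)
  also have "B x (b *\<^sub>R \<xi> + y) = b *\<^sub>R B x \<xi> + B x y"
    using linear_on_scale_add[OF bilinear_on_linear_right[OF bracket_bilinear x(1)] subspace_V reeb_in y(1)] .
  also have "B x \<xi> = - B \<xi> x" using lie_algebra_skew[OF lie x(1) reeb_in] .
  finally show "fst (ext_br B (B \<xi>) p q) *\<^sub>R \<xi> + snd (ext_br B (B \<xi>) p q)
      = B (fst p *\<^sub>R \<xi> + snd p) (fst q *\<^sub>R \<xi> + snd q)"
    by (simp add: pq ext_br_def algebra_simps)
  show "\<eta> (fst p *\<^sub>R \<xi> + snd p) = ext_eta p"
    using linear_on_scale_add[OF eta_linear subspace_V reeb_in x(1)] x(2) eta_reeb
    by (simp add: pq ext_eta_def)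
  have "\<omega> (a *\<^sub>R \<xi> + x) (b *\<^sub>R \<xi> + y) = \<omega> x (b *\<^sub>R \<xi> + y)"
    using linear_on_scale_add[OF omega_linear_left[OF q_in] subspace_V reeb_in x(1)] omega_reeb_left[OF q_in]
    by simp
  also have "\<dots> = \<omega> x y"
    using linear_on_scale_add[OF omega_linear_right[OF x(1)] subspace_V reeb_in y(1)] omega_reeb_right[OF x(1)]
    by simp
  finally show "\<omega> (fst p *\<^sub>R \<xi> + snd p) (fst q *\<^sub>R \<xi> + snd q) = ext_omega \<omega> p q"
    by (simp add: pq ext_omega_def)
qed

end

section \<open>From symplectic Lie algebras to \<alpha>-cosymplectic ones\<close>

lemma ext_carrier_iff: "p \<in> ext_carrier H \<longleftrightarrow> snd p \<in> H"
  by (simp add: ext_carrier_def)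

lemma subspace_ext_carrier: "subspace H \<Longrightarrow> subspace (ext_carrier H)"
  unfolding subspace_def by (simp add: ext_carrier_iff)

lemma ext_br_ext_br:
  assumes L: "lie_algebra H B" and D: "derivation H B D" and x: "x \<in> H" and y: "y \<in> H" and z: "z \<in> H"
  shows "ext_br B D (a, x) (ext_br B D (b, y) (c, z)) =
    (0, B x (B y z) + b *\<^sub>R B x (D z) - c *\<^sub>R B x (D y) + a *\<^sub>R (B (D y) z + B y (D z))
        + (a * b) *\<^sub>R D (D z) - (a * c) *\<^sub>R D (D y))"
proof -
  have H: "subspace H" and cl: "\<And>x y. x \<in> H \<Longrightarrow> y \<in> H \<Longrightarrow> B x y \<in> H" and bl: "bilinear_on H B"
    using L unfolding lie_algebra_def by blast+
  have DH: "\<And>x. x \<in> H \<Longrightarrow> D x \<in> H" and lD: "linear_on H D"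
    and Dd: "D (B y z) = B (D y) z + B y (D z)"
    using D y z unfolding derivation_def by blast+
  define u where "u = B y z + b *\<^sub>R D z - c *\<^sub>R D y"
  have in_H: "B y z \<in> H" "b *\<^sub>R D z \<in> H" "c *\<^sub>R D y \<in> H" "B y z + b *\<^sub>R D z \<in> H"
    using cl DH y z subspace_scale[OF H] subspace_add[OF H] by auto
  have "ext_br B D (a, x) (ext_br B D (b, y) (c, z)) = (0, B x u + a *\<^sub>R D u)"
    by (simp add: ext_br_def u_def)
  moreover have "B x u = B x (B y z) + b *\<^sub>R B x (D z) - c *\<^sub>R B x (D y)"
    using bilinear_on_linear_right[OF bl x] in_H DH y z
    by (simp add: u_def linear_on_diff[OF _ H] linear_on_add linear_on_scale)
  moreover have "D u = B (D y) z + B y (D z) + b *\<^sub>R D (D z) - c *\<^sub>R D (D y)"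
    using lD in_H DH y z Dd
    by (simp add: u_def linear_on_diff[OF _ H] linear_on_add linear_on_scale)
  ultimately show ?thesis by (simp add: algebra_simps)
qed

lemma ext_br_jacobi:
  assumes L: "lie_algebra H B" and D: "derivation H B D" and x: "x \<in> H" and y: "y \<in> H" and z: "z \<in> H"
  shows "ext_br B D (a, x) (ext_br B D (b, y) (c, z)) + ext_br B D (b, y) (ext_br B D (c, z) (a, x))
       + ext_br B D (c, z) (ext_br B D (a, x) (b, y)) = 0"
proof -
  have "B x (B y z) + B y (B z x) + B z (B x y) = 0"
    using L x y z unfolding lie_algebra_def by blast
  moreover have "\<And>x. x \<in> H \<Longrightarrow> D x \<in> H" using D unfolding derivation_def by blast
  then have "B (D y) z = - B z (D y)" "B (D z) x = - B x (D z)" "B (D x) y = - B y (D x)"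
    using lie_algebra_skew[OF L] x y z by blast+
  ultimately show ?thesis
    unfolding ext_br_ext_br[OF L D x y z] ext_br_ext_br[OF L D y z x] ext_br_ext_br[OF L D z x y]
    by (simp add: algebra_simps zero_prod_def)
qed

lemma lie_algebra_ext_br:
  assumes L: "lie_algebra H B" and D: "derivation H B D"
  shows "lie_algebra (ext_carrier H) (ext_br B D)"
proof -
  have H: "subspace H" and cl: "\<And>x y. x \<in> H \<Longrightarrow> y \<in> H \<Longrightarrow> B x y \<in> H" and bl: "bilinear_on H B"
    and al: "\<And>x. x \<in> H \<Longrightarrow> B x x = 0"
    using L unfolding lie_algebra_def by blast+
  have DH: "\<And>x. x \<in> H \<Longrightarrow> D x \<in> H" and lD: "linear_on H D"
    using D unfolding derivation_def by blast+
  have "bilinear_on (ext_carrier H) (ext_br B D)"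
    unfolding bilinear_on_def linear_on_def
  proof (intro conjI ballI allI)
    fix p q r and c :: real
    assume "p \<in> ext_carrier H" "q \<in> ext_carrier H" "r \<in> ext_carrier H"
    then have x: "snd p \<in> H" and y: "snd q \<in> H" and z: "snd r \<in> H"
      by (simp_all add: ext_carrier_iff)
    note lin = linear_on_add[OF bilinear_on_linear_right[OF bl x] y z]
      linear_on_scale[OF bilinear_on_linear_right[OF bl x] y]
      linear_on_add[OF bilinear_on_linear_left[OF bl x] y z]
      linear_on_scale[OF bilinear_on_linear_left[OF bl x] y]
      linear_on_add[OF lD y z] linear_on_scale[OF lD y]
    show "ext_br B D p (q + r) = ext_br B D p q + ext_br B D p r"
      and "ext_br B D p (c *\<^sub>R q) = c *\<^sub>R ext_br B D p q"
      and "ext_br B D (q + r) p = ext_br B D q p + ext_br B D r p"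
      and "ext_br B D (c *\<^sub>R q) p = c *\<^sub>R ext_br B D q p"
      using lin by (simp_all add: ext_br_def algebra_simps)
  qed
  moreover have "ext_br B D p q \<in> ext_carrier H" if "p \<in> ext_carrier H" "q \<in> ext_carrier H" for p q
    using that cl DH subspace_add[OF H] subspace_diff[OF H] subspace_scale[OF H]
    by (simp add: ext_br_def ext_carrier_iff)
  moreover have "ext_br B D p p = 0" if "p \<in> ext_carrier H" for p
    using that al by (simp add: ext_br_def ext_carrier_iff prod_eq_iff)
  moreover have "ext_br B D p (ext_br B D q r) + ext_br B D q (ext_br B D r p)
      + ext_br B D r (ext_br B D p q) = 0"
    if "p \<in> ext_carrier H" "q \<in> ext_carrier H" "r \<in> ext_carrier H" for p q r
    using that ext_br_jacobi[OF L D] by (cases p; cases q; cases r) (simp add: ext_carrier_iff)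
  ultimately show ?thesis
    unfolding lie_algebra_def using subspace_ext_carrier[OF H] by blast
qed

lemma dim_ext_carrier:
  assumes H: "subspace H" and d: "0 < dim H"
  shows "dim (ext_carrier H) = Suc (dim H)"
proof -
  obtain BH where BH: "BH \<subseteq> H" "independent BH" "H \<subseteq> span BH" "card BH = dim H"
    by (rule basis_exists)
  have "finite BH" using BH(4) d by (intro card_ge_0_finite) simp
  let ?f = "\<lambda>x::'a. (0::real, x)"
  let ?B = "insert (1, 0) (?f ` BH)"
  have lf: "linear ?f" by (rule linearI) simp_all
  have spf: "span (?f ` BH) = ?f ` span BH" by (rule span_linear_image[OF lf])
  have "independent (?f ` BH)"
    by (rule linear_independent_injective_image[OF lf BH(2)]) (simp add: inj_on_def)
  moreover have "(1, 0) \<notin> span (?f ` BH)" unfolding spf by auto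
  ultimately have indep: "independent ?B" by (rule independent_insertI[rotated])
  have "ext_carrier H \<subseteq> span ?B"
  proof
    fix p assume "p \<in> ext_carrier H"
    then have "?f (snd p) \<in> span ?B"
      using BH(3) spf span_mono[of "?f ` BH" ?B] by (auto simp: ext_carrier_iff)
    moreover have "fst p *\<^sub>R (1, 0) \<in> span ?B" by (rule span_scale, rule span_base) simp
    ultimately have "?f (snd p) + fst p *\<^sub>R (1, 0) \<in> span ?B" by (rule span_add)
    then show "p \<in> span ?B" by (simp add: prod_eq_iff)
  qed
  moreover have "?B \<subseteq> ext_carrier H" using BH(1) subspace_0[OF H] by (auto simp: ext_carrier_iff)
  moreover have "inj_on ?f BH" by (simp add: inj_on_def)
  then have "card ?B = Suc (dim H)" using \<open>finite BH\<close> BH(4) by (simp add: card_image image_iff)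
  ultimately show ?thesis using dim_unique[OF _ _ indep] by blast
qed

lemma two_form_ext_omega: "two_form H \<Omega> \<Longrightarrow> two_form (ext_carrier H) (ext_omega \<Omega>)"
  unfolding two_form_def bilinear_on_def linear_on_def
  by (auto simp: ext_omega_def ext_carrier_iff)

lemma eta_omega_pow_ext:
  "eta_omega_pow ext_eta (ext_omega \<Omega>) n (case_nat (1, 0) (\<lambda>k. (0, w k))) = omega_pow \<Omega> n w"
proof -
  let ?u = "case_nat (1, 0) (\<lambda>k. (0, w k))"
  have "eta_omega_pow ext_eta (ext_omega \<Omega>) n ?u = ext_eta (?u 0) * omega_pow (ext_omega \<Omega>) n (?u \<circ> Suc)"
  proof (rule eta_omega_pow_first_slot)
    fix \<sigma> :: "nat \<Rightarrow> nat" assume "\<sigma> 0 \<noteq> 0"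
    then show "eta_omega_monomial ext_eta (ext_omega \<Omega>) n (?u \<circ> \<sigma>) = 0"
      by (cases "\<sigma> 0") (simp_all add: eta_omega_monomial_def ext_eta_def)
  qed
  then show ?thesis
    by (simp add: ext_eta_def omega_pow_def ext_omega_def)
qed

lemma almost_cosymplectic_ext:
  assumes H: "subspace H" and \<Omega>: "two_form H \<Omega>" and nz: "nonzero_on H (2*n) (omega_pow \<Omega> n)"
  shows "almost_cosymplectic (ext_carrier H) ext_eta (ext_omega \<Omega>) n"
proof -
  obtain w where w: "\<forall>i<2*n. w i \<in> H" "omega_pow \<Omega> n w \<noteq> 0"
    using nz unfolding nonzero_on_def by blast
  have "\<forall>i<2*n+1. case_nat (1, 0) (\<lambda>k. (0, w k)) i \<in> ext_carrier H"
    using w(1) subspace_0[OF H] by (auto simp: ext_carrier_iff split: nat.split)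
  then have "nonzero_on (ext_carrier H) (2*n+1) (eta_omega_pow ext_eta (ext_omega \<Omega>) n)"
    unfolding nonzero_on_def using w(2) eta_omega_pow_ext by metis
  then show ?thesis
    unfolding almost_cosymplectic_def
    using two_form_ext_omega[OF \<Omega>] by (simp add: linear_on_def ext_eta_def)
qed

lemma d2_ext_omega:
  assumes H: "subspace H" and \<Omega>: "two_form H \<Omega>"
    and closed: "\<forall>x\<in>H. \<forall>y\<in>H. \<forall>z\<in>H. d2 B \<Omega> x y z = 0"
    and cl: "\<And>x y. x \<in> H \<Longrightarrow> y \<in> H \<Longrightarrow> B x y \<in> H" and DH: "\<And>x. x \<in> H \<Longrightarrow> D x \<in> H"
    and skew: "\<forall>x\<in>H. \<forall>y\<in>H. \<Omega> (D x) y - \<Omega> (D y) x = - 2 * \<alpha> * \<Omega> x y"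
    and pqr: "p \<in> ext_carrier H" "q \<in> ext_carrier H" "r \<in> ext_carrier H"
  shows "d2 (ext_br B D) (ext_omega \<Omega>) p q r = 2 * \<alpha> * wedge12 ext_eta (ext_omega \<Omega>) p q r"
proof -
  obtain a x b y c z where p: "p = (a, x)" and q: "q = (b, y)" and r: "r = (c, z)"
    by (metis prod.exhaust)
  have x: "x \<in> H" and y: "y \<in> H" and z: "z \<in> H" using pqr p q r by (auto simp: ext_carrier_iff)
  have expand: "\<Omega> (B u v + e *\<^sub>R D v - e' *\<^sub>R D u) f = \<Omega> (B u v) f + e * \<Omega> (D v) f - e' * \<Omega> (D u) f"
    if u: "u \<in> H" and v: "v \<in> H" and f: "f \<in> H" for u v e e' f
  proof -
    note lin = bilinear_on_linear_left[OF two_form_bilinear_on[OF \<Omega>] f]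
    have "B u v \<in> H" "e *\<^sub>R D v \<in> H" "e' *\<^sub>R D u \<in> H"
      using cl DH u v subspace_scale[OF H] by auto
    then show ?thesis
      using linear_on_diff[OF lin H subspace_add[OF H]] linear_on_add[OF lin]
        linear_on_scale[OF lin DH[OF u]] linear_on_scale[OF lin DH[OF v]]
      by simp
  qed
  have "d2 (ext_br B D) (ext_omega \<Omega>) p q r = d2 B \<Omega> x y z
      + a * (\<Omega> (D z) y - \<Omega> (D y) z) + b * (\<Omega> (D x) z - \<Omega> (D z) x) + c * (\<Omega> (D y) x - \<Omega> (D x) y)"
    unfolding p q r d2_def ext_omega_def ext_br_def snd_conv fst_conv
      expand[OF x y z] expand[OF y z x] expand[OF z x y]
    by (simp add: algebra_simps)
  also have "\<dots> = 2 * \<alpha> * wedge12 ext_eta (ext_omega \<Omega>) p q r"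
  proof -
    have "\<Omega> (D z) y - \<Omega> (D y) z = 2 * \<alpha> * \<Omega> y z"
      "\<Omega> (D x) z - \<Omega> (D z) x = 2 * \<alpha> * \<Omega> z x"
      "\<Omega> (D y) x - \<Omega> (D x) y = 2 * \<alpha> * \<Omega> x y"
      using skew x y z two_form_skew[OF \<Omega> H z y] two_form_skew[OF \<Omega> H x z]
        two_form_skew[OF \<Omega> H y x]
      by simp_all
    then show ?thesis
      using closed x y z by (simp add: p q r wedge12_def ext_eta_def ext_omega_def algebra_simps)
  qed
  finally show ?thesis .
qed

lemma alpha_cosymplectic_ext:
  assumes L: "lie_algebra H B" and sympl: "symplectic H B \<Omega> n" and D: "derivation H B D"
    and inf: "inf_symplectic H \<Omega> (\<lambda>x. D x + \<alpha> *\<^sub>R x)"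
  shows "alpha_cosymplectic (ext_carrier H) (ext_br B D) ext_eta (ext_omega \<Omega>) \<alpha> n"
proof -
  have H: "subspace H" and cl: "\<And>x y. x \<in> H \<Longrightarrow> y \<in> H \<Longrightarrow> B x y \<in> H"
    using L unfolding lie_algebra_def by blast+
  have \<Omega>: "two_form H \<Omega>" and closed: "\<forall>x\<in>H. \<forall>y\<in>H. \<forall>z\<in>H. d2 B \<Omega> x y z = 0"
    and nz: "nonzero_on H (2*n) (omega_pow \<Omega> n)"
    using sympl unfolding symplectic_def by blast+
  have DH: "\<forall>x\<in>H. D x \<in> H" and lD: "linear_on H D" using D unfolding derivation_def by blast+
  note skew = inf_symplectic_shift_iff[OF H \<Omega> DH lD, THEN iffD1, OF inf]
  show ?thesis
    unfolding alpha_cosymplectic_def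
    using almost_cosymplectic_ext[OF H \<Omega> nz] d2_ext_omega[OF H \<Omega> closed cl _ skew] DH
    by (simp add: d1_def ext_br_def ext_eta_def)
qed

lemma reeb_ext: "subspace H \<Longrightarrow> two_form H \<Omega> \<Longrightarrow> reeb (ext_carrier H) ext_eta (ext_omega \<Omega>) (1, 0)"
  unfolding reeb_def
  using linear_on_0[OF bilinear_on_linear_left[OF two_form_bilinear_on]] subspace_0
  by (fastforce simp: ext_carrier_iff ext_eta_def ext_omega_def)

lemma kernel_ext_eta: "{p \<in> ext_carrier H. ext_eta p = 0} = (\<lambda>x. (0, x)) ` H"
  by (auto simp: ext_carrier_iff ext_eta_def image_iff prod_eq_iff)

lemma ext_br_reeb:
  assumes L: "lie_algebra H B" and x: "x \<in> H"
  shows "ext_br B D (1, 0) (0, x) = (0, D x)"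
proof -
  have "subspace H" "bilinear_on H B" using L unfolding lie_algebra_def by blast+
  then have "B 0 x = 0" using linear_on_0[OF bilinear_on_linear_left[OF _ x]] by blast
  then show ?thesis by (simp add: ext_br_def)
qed

theorem mainTheorem4:
  fixes \<alpha> :: real and n :: nat
  assumes n1: "n \<ge> 1"
  shows
  \<comment> \<open>(1) from an alpha-cosymplectic Lie algebra to (h, Omega, D), and back up to isomorphism\<close>
  "(\<forall>(V :: 'a::real_vector set) B \<eta> \<omega>.
      lie_algebra V B \<and> dim V = 2*n+1 \<and> alpha_cosymplectic V B \<eta> \<omega> \<alpha> n \<longrightarrow>
      (\<exists>!\<xi>. reeb V \<eta> \<omega> \<xi>) \<and>
      (\<forall>\<xi>. reeb V \<eta> \<omega> \<xi> \<longrightarrow>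
        (let H = {x \<in> V. \<eta> x = 0}; D = B \<xi>; f = (\<lambda>p. fst p *\<^sub>R \<xi> + snd p) in
          lie_algebra H B \<and> dim H = 2*n \<and> symplectic H B \<omega> n \<and> derivation H B D
          \<and> inf_symplectic H \<omega> (\<lambda>x. D x + \<alpha> *\<^sub>R x)
          \<and> bij_betw f (ext_carrier H) V
          \<and> (\<forall>p\<in>ext_carrier H. \<forall>q\<in>ext_carrier H.
                f (ext_br B D p q) = B (f p) (f q)
              \<and> \<eta> (f p) = ext_eta p
              \<and> \<omega> (f p) (f q) = ext_omega \<omega> p q))))
  \<and>
  \<comment> \<open>(2) from (h, Omega, D) to an alpha-cosymplectic Lie algebra, and back\<close>
   (\<forall>(H :: 'b::real_vector set) B \<Omega> D.
      lie_algebra H B \<and> dim H = 2*n \<and> symplectic H B \<Omega> n \<and> derivation H B D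
      \<and> inf_symplectic H \<Omega> (\<lambda>x. D x + \<alpha> *\<^sub>R x) \<longrightarrow>
      lie_algebra (ext_carrier H) (ext_br B D) \<and> dim (ext_carrier H) = 2*n+1
      \<and> alpha_cosymplectic (ext_carrier H) (ext_br B D) ext_eta (ext_omega \<Omega>) \<alpha> n
      \<and> (\<forall>\<xi>. reeb (ext_carrier H) ext_eta (ext_omega \<Omega>) \<xi> \<longleftrightarrow> \<xi> = (1, 0))
      \<and> {p \<in> ext_carrier H. ext_eta p = 0} = (\<lambda>x. (0, x)) ` H
      \<and> (\<forall>x\<in>H. \<forall>y\<in>H. ext_br B D (0, x) (0, y) = (0, B x y)
                     \<and> ext_omega \<Omega> (0, x) (0, y) = \<Omega> x y)
      \<and> (\<forall>x\<in>H. ext_br B D (1, 0) (0, x) = (0, D x)))"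
  apply (rule conjI; intro allI impI; elim conjE)
  subgoal premises hyps for V B \<eta> \<omega>
    apply (rule conjI)
    subgoal using hyps by (intro ex1_reeb) (auto simp: lie_algebra_def alpha_cosymplectic_def)
    apply (intro allI impI)
    subgoal premises reeb for \<xi>
    proof -
      interpret alpha_cosymplectic_reeb V B \<eta> \<omega> \<alpha> n \<xi>
        using hyps reeb by unfold_locales
      show ?thesis
        unfolding Let_def
        using lie_algebra_kernel dim_kernel symplectic_kernel derivation_ad_reeb
          inf_symplectic_ad_reeb bij_betw_splitting splitting_hom
        by blast
    qed
    done
  subgoal premises hyps for H B \<Omega> D
  proof -
    have H: "subspace H" using hyps(1) by (simp add: lie_algebra_def)
    have \<Omega>: "two_form H \<Omega>" using hyps(3) by (simp add: symplectic_def)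
    have dim_ext: "dim (ext_carrier H) = 2*n+1" using dim_ext_carrier[OF H] hyps(2) n1 by simp
    have cosymplectic: "alpha_cosymplectic (ext_carrier H) (ext_br B D) ext_eta (ext_omega \<Omega>) \<alpha> n"
      using alpha_cosymplectic_ext[OF hyps(1,3,4,5)] .
    then have "\<exists>!\<xi>. reeb (ext_carrier H) ext_eta (ext_omega \<Omega>) \<xi>"
      using ex1_reeb[OF subspace_ext_carrier[OF H] dim_ext] by (simp add: alpha_cosymplectic_def)
    then show ?thesis
      using lie_algebra_ext_br[OF hyps(1,4)] dim_ext cosymplectic reeb_ext[OF H \<Omega>] kernel_ext_eta
        ext_br_reeb[OF hyps(1)]
      by (auto simp: ext_br_def ext_omega_def)
  qed
  done

end
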